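(* In the setting of the context, for every integer $k\ge 2$, \[ \lim_{N\to\infty}M_{2k}(N)\;<\;(2k-1)!!, \] where $(2k-1)!!=(2k-1)(2k-3)\cdots 3\cdot1$ is the $2k$-th moment of the standard Gaussian.
   Context: Let $p$ be a probability density on $\mathbb{R}$ with mean $0$, variance $1$ and finite moments of all orders. For $N\ge 1$, let $b_1,\dots,b_{N-1}$ be independent random variables with density $p$, set $b_0=0$, and let $A=A_N$ be the $N\times N$ real symmetric Toeplitz matrix with entries $a_{ij}=b_{|i-j|}$ ($1\le i,j\le N$). Let $\lambda_1(A),\dots,\lambda_N(A)$ be its eigenvalues. For an integer $k\ge 0$ define $M_k(A,N)=N^{-(k/2+1)}\sum_{i=1}^N\lambda_i(A)^k = N^{-(k/2+1)}\,\mathrm{Trace}(A^k)$, and $M_k(N)=\mathbb{E}[M_k(A,N)]$, the expectation over the random entries. The limit $\lim_{N\to\infty}M_{2k}(N)$ exists. *)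

theory Defs
  imports "HOL-Probability.Probability" "Jordan_Normal_Form.Matrix"
begin

definition mat_trace :: "real mat \<Rightarrow> real" where
  "mat_trace A = (\<Sum>i<dim_row A. A $$ (i, i))"

definition toeplitz_mat :: "(nat \<Rightarrow> 'a \<Rightarrow> real) \<Rightarrow> nat \<Rightarrow> 'a \<Rightarrow> real mat" where
  "toeplitz_mat X N \<omega> =
     mat N N (\<lambda>(i, j). let d = (if i \<le> j then j - i else i - j) in
                        if d = 0 then 0 else X d \<omega>)"

definition moment_AN :: "(nat \<Rightarrow> 'a \<Rightarrow> real) \<Rightarrow> nat \<Rightarrow> nat \<Rightarrow> 'a \<Rightarrow> real" where
  "moment_AN X k N \<omega> =
     real N powr (-(real k / 2 + 1)) * mat_trace (toeplitz_mat X N \<omega> ^\<^sub>m k)"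

definition moment_N :: "'a measure \<Rightarrow> (nat \<Rightarrow> 'a \<Rightarrow> real) \<Rightarrow> nat \<Rightarrow> nat \<Rightarrow> real" where
  "moment_N M X k N = integral\<^sup>L M (moment_AN X k N)"

definition odd_double_fact :: "nat \<Rightarrow> nat" where
  "odd_double_fact k = (\<Prod>i<k. 2 * i + 1)"

end

theory Submission
  imports Defs
begin

text \<open>Expanding the trace, \<open>M\<^bsub>2k\<^esub>(N)\<close> is \<open>N^-(k+1)\<close> times a sum over closed walks of
  length \<open>2k\<close> on \<open>{0..N-1}\<close> of the expected product of the entries \<open>b\<close> indexed by the lengths
  of the steps. As the \<open>b\<^sub>j\<close> are independent with mean \<open>0\<close> and variance \<open>1\<close>, a walk
  contributes \<open>1\<close> if its steps come in pairs of equal length and opposite direction, \<open>0\<close> if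
  some step length occurs only once, and a bounded amount otherwise; walks of the last kind
  number only \<open>O(N^k)\<close>. So up to \<open>O(1/N)\<close>, \<open>M\<^bsub>2k\<^esub>(N)\<close> is the sum over the pairings \<open>\<sigma>\<close>
  of \<open>{0..2k-1}\<close> (there are at most \<open>(2k-1)!!\<close>) of the number of walks respecting \<open>\<sigma>\<close>,
  divided by \<open>N^(k+1)\<close>. That number counts the lattice points of the \<open>N\<close>-th dilate of a
  polytope in \<open>\<real>^(k+1)\<close>, so the ratio converges to its volume, which is at most \<open>1\<close>. For the
  crossing pairing \<open>{0,2}, {1,3}, ...\<close> the relation \<open>g\<^sub>3 = g\<^sub>0 - g\<^sub>1 + g\<^sub>2\<close> removes a fixed
  fraction of the walks, so the limit is strictly smaller than \<open>(2k-1)!!\<close>.\<close>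

section \<open>Lattice points in dilated polytopes\<close>

lemma card_PiE_level_set_le:
  assumes "finite I" "i \<in> I" "finite S"
    and determined: "\<And>z z'. \<forall>j\<in>I - {i}. z j = z' j \<Longrightarrow> G z = G z' \<Longrightarrow> z i = z' i"
  shows "card {z \<in> PiE I (\<lambda>_. S). G z = c} \<le> card S ^ (card I - 1)"
proof -
  let ?A = "{z \<in> PiE I (\<lambda>_. S). G z = c}"
  have "inj_on (\<lambda>z. restrict z (I - {i})) ?A"
  proof (rule inj_onI)
    fix z z' assume z: "z \<in> ?A" and z': "z' \<in> ?A"
      and eq: "restrict z (I - {i}) = restrict z' (I - {i})"
    have agree: "\<forall>j\<in>I - {i}. z j = z' j" using eq by (metis restrict_apply')
    then have "\<And>j. j \<in> I \<Longrightarrow> z j = z' j" using determined[OF agree] z z' by auto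
    then show "z = z'" using z z' by (auto intro: PiE_ext)
  qed
  then have "card ?A = card ((\<lambda>z. restrict z (I - {i})) ` ?A)" by (simp add: card_image)
  also have "\<dots> \<le> card (PiE (I - {i}) (\<lambda>_. S))"
    by (rule card_mono) (force simp: finite_PiE assms PiE_iff)+
  also have "\<dots> = card S ^ (card I - 1)" using assms by (simp add: card_PiE)
  finally show ?thesis .
qed

lemma abs_le_in_PiE:
  fixes c :: "'a::linordered_idom"
  assumes "\<And>i. i \<in> I \<Longrightarrow> \<bar>f i\<bar> \<le> c" "f \<in> extensional I"
  shows "f \<in> PiE I (\<lambda>_. {-c..c})"
proof -
  have "f i \<in> {-c..c}" if "i \<in> I" for i
    using abs_le_D1[OF assms(1)[OF that]] abs_le_D2[OF assms(1)[OF that]] by simp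
  then show ?thesis using assms(2) by (auto simp: PiE_iff)
qed

text \<open>The points counted by \<open>points N\<close> are the lattice points of the \<open>N\<close>-th dilate of
  the polytope cut out by the linear forms \<open>L t\<close>. Writing a lattice point of the \<open>mN\<close>-th
  dilate as \<open>m w + r\<close> with \<open>0 \<le> r < m\<close> shows that it lies between the \<open>m\<close>-fold refinements of
  an inner and an outer approximation of the \<open>N\<close>-th dilate; these differ only in a
  boundary layer of \<open>O(N^(d-1))\<close> points, so the densities form a Cauchy sequence.\<close>
locale lattice_count =
  fixes I :: "'i set" and T :: "'t set" and L :: "'t \<Rightarrow> ('i \<Rightarrow> int) \<Rightarrow> int"
    and K B :: int
  assumes finite_I: "finite I" and I_nonempty: "I \<noteq> {}" and finite_T: "finite T"
    and L_local: "\<And>t z z'. t \<in> T \<Longrightarrow> (\<And>i. i \<in> I \<Longrightarrow> z i = z' i) \<Longrightarrow> L t z = L t z'"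
    and L_linear: "\<And>t m w r. t \<in> T \<Longrightarrow> L t (\<lambda>i. m * w i + r i) = m * L t w + L t r"
    and L_bounded: "\<And>t r R. t \<in> T \<Longrightarrow> (\<And>i. i \<in> I \<Longrightarrow> \<bar>r i\<bar> \<le> R) \<Longrightarrow> \<bar>L t r\<bar> \<le> K * R"
    and coords_bounded:
      "\<And>z R i. (\<And>t. t \<in> T \<Longrightarrow> \<bar>L t z\<bar> \<le> R) \<Longrightarrow> i \<in> I \<Longrightarrow> \<bar>z i\<bar> \<le> B * R"
    and L_nonconstant: "\<And>t. t \<in> T \<Longrightarrow>
      \<exists>i\<in>I. \<forall>z z'. (\<forall>j\<in>I - {i}. z j = z' j) \<longrightarrow> L t z = L t z' \<longrightarrow> z i = z' i"
    and K_nonneg: "K \<ge> 0" and B_nonneg: "B \<ge> 0"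
begin

definition points :: "nat \<Rightarrow> ('i \<Rightarrow> int) set" where
  "points N = {z \<in> PiE I (\<lambda>_. {-(B * int N)..B * int N}). \<forall>t\<in>T. 0 \<le> L t z \<and> L t z < int N}"

definition outer :: "nat \<Rightarrow> ('i \<Rightarrow> int) set" where
  "outer N = {w \<in> PiE I (\<lambda>_. {-(B * (int N + K))..B * (int N + K)}).
     \<forall>t\<in>T. -K \<le> L t w \<and> L t w < int N + K}"

definition inner :: "nat \<Rightarrow> ('i \<Rightarrow> int) set" where
  "inner N = {w \<in> points N. \<forall>t\<in>T. K \<le> L t w \<and> L t w < int N - K}"

definition lattice_density :: "nat \<Rightarrow> real" where
  "lattice_density N = real (card (points N)) / real N ^ card I"

definition scaled_sum :: "int \<Rightarrow> ('i \<Rightarrow> int) \<times> ('i \<Rightarrow> int) \<Rightarrow> 'i \<Rightarrow> int" where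
  "scaled_sum m wr = (\<lambda>i. if i \<in> I then m * fst wr i + snd wr i else undefined)"

lemma L_scaled_sum: "t \<in> T \<Longrightarrow> L t (scaled_sum m (w, r)) = m * L t w + L t r"
  by (subst L_local[of t _ "\<lambda>i. m * w i + r i"]) (auto simp: scaled_sum_def L_linear)

lemma finite_points: "finite (points N)"
  unfolding points_def
  by (rule finite_subset[of _ "PiE I (\<lambda>_. {-(B * int N)..B * int N})"]) (auto intro: finite_PiE finite_I)

lemma finite_outer: "finite (outer N)"
  unfolding outer_def
  by (rule finite_subset[of _ "PiE I (\<lambda>_. {-(B * (int N + K))..B * (int N + K)})"])
     (auto intro: finite_PiE finite_I)

lemma inner_subset_points: "inner N \<subseteq> points N"
  unfolding inner_def by auto

lemma points_subset_outer: "points N \<subseteq> outer N"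
proof
  fix z assume z: "z \<in> points N"
  have "B * int N \<le> B * (int N + K)" using K_nonneg B_nonneg by (simp add: mult_left_mono)
  then show "z \<in> outer N" using z K_nonneg unfolding points_def outer_def by (force simp: PiE_iff)
qed

lemma L_remainder_bound: "t \<in> T \<Longrightarrow> r \<in> PiE I (\<lambda>_. {0..<m}) \<Longrightarrow> \<bar>L t r\<bar> \<le> K * m"
  by (rule L_bounded) (auto simp: PiE_iff)

lemma inj_on_scaled_sum:
  "m > 0 \<Longrightarrow> inj_on (scaled_sum m) (PiE I (\<lambda>_. UNIV) \<times> PiE I (\<lambda>_. {0..<m}))"
proof (rule inj_onI, clarify)
  fix w r w' r' assume m: "m > 0" and w: "w \<in> PiE I (\<lambda>_. UNIV)" and r: "r \<in> PiE I (\<lambda>_. {0..<m})"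
    and w': "w' \<in> PiE I (\<lambda>_. UNIV)" and r': "r' \<in> PiE I (\<lambda>_. {0..<m})"
    and eq: "scaled_sum m (w, r) = scaled_sum m (w', r')"
  have "w i = w' i \<and> r i = r' i" if i: "i \<in> I" for i
  proof -
    have e: "m * w i + r i = m * w' i + r' i" using fun_cong[OF eq, of i] i by (simp add: scaled_sum_def)
    have "0 \<le> r i" "r i < m" "0 \<le> r' i" "r' i < m" using r r' i by (auto simp: PiE_iff)
    then have "(m * w i + r i) div m = w i" "(m * w' i + r' i) div m = w' i" using m by simp_all
    then show ?thesis using e by simp
  qed
  then show "w = w' \<and> r = r'" using PiE_ext[OF w w'] PiE_ext[OF r r'] by blast
qed

lemma card_inner_scaled_le:
  assumes m: "m > 0"
  shows "card (inner N) * m ^ card I \<le> card (points (m * N))"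
proof -
  let ?R = "PiE I (\<lambda>_. {0..<int m})"
  have sub: "scaled_sum (int m) ` (inner N \<times> ?R) \<subseteq> points (m * N)"
  proof clarify
    fix w r assume w: "w \<in> inner N" and r: "r \<in> ?R"
    have L_range: "0 \<le> L t (scaled_sum (int m) (w, r)) \<and> L t (scaled_sum (int m) (w, r)) < int (m * N)"
      if t: "t \<in> T" for t
    proof -
      have "K \<le> L t w" "L t w \<le> int N - K - 1" using w t by (auto simp: inner_def)
      then have "int m * K \<le> int m * L t w" "int m * L t w \<le> int m * (int N - K - 1)"
        by (simp_all add: mult_left_mono)
      moreover have "\<bar>L t r\<bar> \<le> int m * K" using L_remainder_bound[OF t r] by (simp add: mult.commute)
      moreover have "int m * (int N - K - 1) = int m * int N - int m * K - int m"
        by (simp add: algebra_simps)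
      ultimately show ?thesis unfolding L_scaled_sum[OF t] of_nat_mult using m by linarith
    qed
    have "\<And>i. i \<in> I \<Longrightarrow> \<bar>scaled_sum (int m) (w, r) i\<bar> \<le> B * int (m * N)"
      by (rule coords_bounded) (use L_range in fastforce)
    then have "scaled_sum (int m) (w, r) \<in> PiE I (\<lambda>_. {-(B * int (m * N))..B * int (m * N)})"
      by (intro abs_le_in_PiE) (auto simp: scaled_sum_def extensional_def)
    with L_range show "scaled_sum (int m) (w, r) \<in> points (m * N)" by (auto simp: points_def)
  qed
  have inj: "inj_on (scaled_sum (int m)) (inner N \<times> ?R)"
    by (rule inj_on_subset[OF inj_on_scaled_sum])
       (use m in \<open>auto simp: inner_def points_def PiE_iff extensional_def\<close>)
  have "card (inner N) * m ^ card I = card (inner N \<times> ?R)"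
    by (simp add: card_cartesian_product card_PiE finite_I)
  also have "\<dots> = card (scaled_sum (int m) ` (inner N \<times> ?R))" by (simp add: card_image[OF inj])
  also have "\<dots> \<le> card (points (m * N))" by (rule card_mono[OF finite_points sub])
  finally show ?thesis .
qed

lemma card_scaled_le_outer:
  assumes m: "m > 0"
  shows "card (points (m * N)) \<le> card (outer N) * m ^ card I"
proof -
  let ?R = "PiE I (\<lambda>_. {0..<int m})"
  have sub: "points (m * N) \<subseteq> scaled_sum (int m) ` (outer N \<times> ?R)"
  proof
    fix z assume z: "z \<in> points (m * N)"
    define w where "w = (\<lambda>i. if i \<in> I then z i div int m else undefined)"
    define r where "r = (\<lambda>i. if i \<in> I then z i mod int m else undefined)"
    have z_eq: "z = scaled_sum (int m) (w, r)"
      using z by (auto simp: scaled_sum_def w_def r_def points_def PiE_iff extensional_def fun_eq_iff)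
    have r: "r \<in> ?R" using m by (auto simp: r_def PiE_iff extensional_def)
    have L_range: "-K \<le> L t w \<and> L t w < int N + K" if t: "t \<in> T" for t
    proof -
      have "0 \<le> L t z" "L t z < int m * int N" using z t by (auto simp: points_def)
      moreover have "\<bar>L t r\<bar> \<le> K * int m" using L_remainder_bound[OF t r] .
      moreover have "L t z = int m * L t w + L t r" using L_scaled_sum[OF t] z_eq by metis
      ultimately have "int m * (-K) \<le> int m * L t w" "int m * L t w < int m * (int N + K)"
        by (auto simp: algebra_simps abs_le_iff)
      moreover have "(0::int) < int m" using m by simp
      ultimately show ?thesis by (metis mult_le_cancel_left_pos mult_less_cancel_left_pos)
    qed
    have "\<And>i. i \<in> I \<Longrightarrow> \<bar>w i\<bar> \<le> B * (int N + K)"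
      by (rule coords_bounded) (use L_range K_nonneg in fastforce)
    then have "w \<in> PiE I (\<lambda>_. {-(B * (int N + K))..B * (int N + K)})"
      by (intro abs_le_in_PiE) (auto simp: w_def extensional_def)
    with L_range have "w \<in> outer N" by (auto simp: outer_def)
    with r z_eq show "z \<in> scaled_sum (int m) ` (outer N \<times> ?R)" by blast
  qed
  have "card (points (m * N)) \<le> card (scaled_sum (int m) ` (outer N \<times> ?R))"
    by (rule card_mono[OF _ sub]) (auto intro!: finite_outer finite_PiE finite_I)
  also have "\<dots> \<le> card (outer N \<times> ?R)" by (rule card_image_le) (auto intro!: finite_outer finite_PiE finite_I)
  also have "\<dots> = card (outer N) * m ^ card I" by (simp add: card_cartesian_product card_PiE finite_I)
  finally show ?thesis .
qed

lemma outer_minus_inner_subset: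
  "outer N - inner N \<subseteq> (\<Union>t\<in>T. \<Union>c\<in>{-K..<K} \<union> {int N - K..<int N + K}.
     {w \<in> PiE I (\<lambda>_. {-(B * (int N + K))..B * (int N + K)}). L t w = c})"
proof
  fix w assume w: "w \<in> outer N - inner N"
  then have w_box: "w \<in> PiE I (\<lambda>_. {-(B * (int N + K))..B * (int N + K)})"
    and L_range: "\<And>t. t \<in> T \<Longrightarrow> -K \<le> L t w \<and> L t w < int N + K"
    by (auto simp: outer_def)
  have "\<exists>t\<in>T. L t w < K \<or> int N - K \<le> L t w"
  proof (rule ccontr)
    assume "\<not> ?thesis"
    then have h: "\<And>t. t \<in> T \<Longrightarrow> K \<le> L t w \<and> L t w < int N - K" by force
    then have "\<And>t. t \<in> T \<Longrightarrow> \<bar>L t w\<bar> \<le> int N" using K_nonneg by (force simp: abs_le_iff)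
    then have "w \<in> PiE I (\<lambda>_. {-(B * int N)..B * int N})"
      by (intro abs_le_in_PiE coords_bounded) (use w_box in \<open>auto simp: PiE_iff\<close>)
    then have "w \<in> inner N" using h K_nonneg unfolding inner_def points_def by force
    with w show False by blast
  qed
  then obtain t where "t \<in> T" "L t w \<in> {-K..<K} \<union> {int N - K..<int N + K}"
    using L_range by fastforce
  with w_box show "w \<in> (\<Union>t\<in>T. \<Union>c\<in>{-K..<K} \<union> {int N - K..<int N + K}.
     {w \<in> PiE I (\<lambda>_. {-(B * (int N + K))..B * (int N + K)}). L t w = c})" by blast
qed

lemma card_outer_minus_inner_le:
  "card (outer N - inner N) \<le> card T * (4 * nat K) * nat (2 * B * (int N + K) + 1) ^ (card I - 1)"
proof -
  let ?S = "{-(B * (int N + K))..B * (int N + K)}"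
  let ?C = "{-K..<K} \<union> {int N - K..<int N + K}"
  let ?level = "\<lambda>t c. {w \<in> PiE I (\<lambda>_. ?S). L t w = c}"
  have card_C: "card ?C \<le> 4 * nat K"
    using card_Un_le[of "{-K..<K}" "{int N - K..<int N + K}"] K_nonneg by simp
  have card_level: "card (?level t c) \<le> nat (2 * B * (int N + K) + 1) ^ (card I - 1)"
    if t: "t \<in> T" for t c
  proof -
    obtain i where "i \<in> I"
      and "\<forall>z z'. (\<forall>j\<in>I - {i}. z j = z' j) \<longrightarrow> L t z = L t z' \<longrightarrow> z i = z' i"
      using L_nonconstant[OF t] by blast
    then show ?thesis using card_PiE_level_set_le[OF finite_I, of i ?S "L t" c] by (simp add: mult.assoc)
  qed
  have "card (outer N - inner N) \<le> card (\<Union>t\<in>T. \<Union>c\<in>?C. ?level t c)"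
    by (rule card_mono[OF _ outer_minus_inner_subset])
       (auto intro!: finite_UN_I finite_T finite_subset[of _ "PiE I (\<lambda>_. ?S)"] finite_PiE finite_I)
  also have "\<dots> \<le> (\<Sum>t\<in>T. \<Sum>c\<in>?C. card (?level t c))"
    by (rule order.trans[OF card_UN_le[OF finite_T]]) (intro sum_mono card_UN_le; simp)
  also have "\<dots> \<le> (\<Sum>t\<in>T. \<Sum>c\<in>?C. nat (2 * B * (int N + K) + 1) ^ (card I - 1))"
    by (intro sum_mono card_level)
  also have "\<dots> \<le> card T * (4 * nat K * nat (2 * B * (int N + K) + 1) ^ (card I - 1))"
    using card_C by (simp add: mult_left_mono)
  finally show ?thesis by (simp add: mult.assoc)
qed

definition boundary_const :: nat where
  "boundary_const = card T * (4 * nat K) * nat (2 * B * (1 + K) + 1) ^ (card I - 1)"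

lemma card_outer_minus_inner_le_power:
  assumes N: "N \<ge> 1"
  shows "card (outer N - inner N) \<le> boundary_const * N ^ (card I - 1)"
proof -
  have "2 * B * (int N + K) + 1 \<le> (2 * B * (1 + K) + 1) * int N"
    using mult_left_mono[of 1 "int N" "2 * B * K"] N K_nonneg B_nonneg by (simp add: algebra_simps)
  then have "nat (2 * B * (int N + K) + 1) \<le> nat ((2 * B * (1 + K) + 1) * int N)"
    by (rule nat_mono)
  also have "\<dots> = nat (2 * B * (1 + K) + 1) * N"
    using K_nonneg B_nonneg by (simp add: nat_mult_distrib)
  finally have "nat (2 * B * (int N + K) + 1) \<le> nat (2 * B * (1 + K) + 1) * N" .
  then have "nat (2 * B * (int N + K) + 1) ^ (card I - 1) \<le> (nat (2 * B * (1 + K) + 1) * N) ^ (card I - 1)"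
    by (rule power_mono) simp
  then have "card (outer N - inner N)
      \<le> card T * (4 * nat K) * (nat (2 * B * (1 + K) + 1) * N) ^ (card I - 1)"
    using card_outer_minus_inner_le[of N] by (meson le_trans mult_le_mono2)
  then show ?thesis by (simp add: boundary_const_def power_mult_distrib)
qed

lemma card_points_scaled_diff:
  assumes m: "m > 0"
  shows "\<bar>real (card (points (m * N))) - real (card (points N)) * real m ^ card I\<bar>
    \<le> real (card (outer N - inner N)) * real m ^ card I"
proof -
  have "card (outer N) \<le> card (points N \<union> (outer N - inner N))"
    using inner_subset_points finite_points finite_outer by (intro card_mono) auto
  then have "card (outer N) \<le> card (points N) + card (outer N - inner N)"
    by (rule order.trans[OF _ card_Un_le])
  then have "card (points (m * N)) \<le> (card (points N) + card (outer N - inner N)) * m ^ card I"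
    using card_scaled_le_outer[OF m, of N] by (meson le_trans mult_le_mono1)
  then have "real (card (points (m * N)))
      \<le> real ((card (points N) + card (outer N - inner N)) * m ^ card I)"
    by (simp only: of_nat_le_iff)
  then have upper: "real (card (points (m * N)))
      \<le> (real (card (points N)) + real (card (outer N - inner N))) * real m ^ card I"
    by simp
  have "card (points N) \<le> card (inner N \<union> (outer N - inner N))"
    using points_subset_outer finite_subset[OF inner_subset_points finite_points] finite_outer
    by (intro card_mono) auto
  then have "card (points N) \<le> card (inner N) + card (outer N - inner N)"
    by (rule order.trans[OF _ card_Un_le])
  then have "real (card (points N)) - real (card (outer N - inner N)) \<le> real (card (inner N))"
    by linarith
  then have "(real (card (points N)) - real (card (outer N - inner N))) * real m ^ card I
      \<le> real (card (inner N)) * real m ^ card I"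
    by (rule mult_right_mono) simp
  also have "\<dots> \<le> real (card (points (m * N)))"
    using of_nat_mono[OF card_inner_scaled_le[OF m, of N]] by simp
  finally have lower: "(real (card (points N)) - real (card (outer N - inner N))) * real m ^ card I
      \<le> real (card (points (m * N)))" .
  show ?thesis using upper lower by (simp add: abs_le_iff algebra_simps)
qed

lemma lattice_density_scaled_diff:
  assumes m: "m \<ge> 1" and N: "N \<ge> 1"
  shows "\<bar>lattice_density (m * N) - lattice_density N\<bar> \<le> real boundary_const / real N"
proof -
  define d where "d = card I"
  have d: "d \<ge> 1" using finite_I I_nonempty by (simp add: d_def Suc_le_eq card_gt_0_iff)
  have pos: "real m ^ d > 0" "real N ^ d > 0" using m N by auto
  have "lattice_density (m * N) = real (card (points (m * N))) / (real m ^ d * real N ^ d)"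
    by (simp add: lattice_density_def d_def power_mult_distrib)
  moreover have "lattice_density N = real (card (points N)) * real m ^ d / (real m ^ d * real N ^ d)"
    using pos by (simp add: lattice_density_def d_def)
  ultimately have "lattice_density (m * N) - lattice_density N
      = (real (card (points (m * N))) - real (card (points N)) * real m ^ d) / (real m ^ d * real N ^ d)"
    by (simp add: diff_divide_distrib)
  then have "\<bar>lattice_density (m * N) - lattice_density N\<bar>
      = \<bar>real (card (points (m * N))) - real (card (points N)) * real m ^ d\<bar> / (real m ^ d * real N ^ d)"
    using pos by (simp add: abs_divide)
  also have "\<dots> \<le> real (card (outer N - inner N)) * real m ^ d / (real m ^ d * real N ^ d)"
    using card_points_scaled_diff[of m N] m pos unfolding d_def by (intro divide_right_mono) simp_all
  also have "\<dots> = real (card (outer N - inner N)) / real N ^ d" using pos by simp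
  also have "\<dots> \<le> real boundary_const * real N ^ (d - 1) / real N ^ d"
    using of_nat_mono[OF card_outer_minus_inner_le_power[OF N]] pos unfolding d_def
    by (intro divide_right_mono) simp_all
  also have "\<dots> = real boundary_const / real N"
    using d N by (cases d) auto
  finally show ?thesis .
qed

lemma convergent_lattice_density: "convergent lattice_density"
proof (rule real_Cauchy_convergent, rule metric_CauchyI)
  fix e :: real assume e: "e > 0"
  let ?C = "real boundary_const"
  define M0 where "M0 = nat \<lceil>2 * ?C / e\<rceil> + 1"
  have M0: "M0 \<ge> 1" "2 * ?C / e < M0" unfolding M0_def by linarith+
  have small: "?C / real n < e / 2" if "n \<ge> M0" for n
  proof -
    have "2 * ?C / e < real n" using M0 that by linarith
    then show ?thesis using e M0 that by (simp add: field_simps)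
  qed
  show "\<exists>M. \<forall>m\<ge>M. \<forall>n\<ge>M. dist (lattice_density m) (lattice_density n) < e"
  proof (intro exI allI impI)
    fix m n assume mn: "m \<ge> M0" "n \<ge> M0"
    have "\<bar>lattice_density (n * m) - lattice_density m\<bar> \<le> ?C / real m"
      "\<bar>lattice_density (m * n) - lattice_density n\<bar> \<le> ?C / real n"
      using mn M0 by (intro lattice_density_scaled_diff; simp)+
    moreover have "dist (lattice_density m) (lattice_density n)
        \<le> dist (lattice_density (m * n)) (lattice_density m)
          + dist (lattice_density (m * n)) (lattice_density n)"
      by (rule dist_triangle3)
    ultimately show "dist (lattice_density m) (lattice_density n) < e"
      using small[OF mn(1)] small[OF mn(2)] unfolding dist_real_def mult.commute[of n m]
      by linarith
  qed
qed

end

section \<open>Closed walks and the trace\<close>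

definition walks :: "nat \<Rightarrow> nat \<Rightarrow> (nat \<Rightarrow> nat) set" where
  "walks n N = PiE {..<n} (\<lambda>_. {..<N})"

lemma finite_walks: "finite (walks n N)"
  by (simp add: walks_def finite_PiE)

lemma index_mat_pow_eq_sum_walks:
  fixes A :: "'a::comm_semiring_1 mat"
  assumes A: "A \<in> carrier_mat N N" and x: "x < N" and y: "y < N"
  shows "(A ^\<^sub>m n) $$ (x, y) =
    (\<Sum>f\<in>{f \<in> walks (Suc n) N. f 0 = x \<and> f n = y}. \<Prod>t<n. A $$ (f t, f (Suc t)))"
  using y
proof (induction n arbitrary: y)
  case 0
  have "dim_row A = N" using A by auto
  moreover have "{f \<in> walks (Suc 0) N. f 0 = x \<and> f 0 = y} = (if x = y then {(\<lambda>i. if i < 1 then x else undefined)} else {})"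
    using x by (auto simp: walks_def PiE_iff extensional_def fun_eq_iff)
  ultimately show ?case using x 0 by simp
next
  case (Suc n)
  define P where "P f = (\<Prod>t<n. A $$ (f t, f (Suc t)))" for f :: "nat \<Rightarrow> nat"
  define S where "S = {f \<in> walks (Suc n) N. f 0 = x}"
  have "(A ^\<^sub>m Suc n) $$ (x, y) = (\<Sum>l<N. (A ^\<^sub>m n) $$ (x, l) * A $$ (l, y))"
    using x Suc.prems A by (simp add: scalar_prod_def row_def col_def lessThan_atLeast0)
  also have "\<dots> = (\<Sum>l<N. \<Sum>f\<in>{f \<in> S. f n = l}. P f * A $$ (f n, y))"
    using Suc.IH by (simp add: P_def S_def sum_distrib_right conj_assoc)
  also have "\<dots> = (\<Sum>f\<in>S. P f * A $$ (f n, y))"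
    by (rule sum.group) (auto simp: S_def walks_def PiE_iff intro: finite_subset[OF _ finite_walks])
  also have "\<dots> = (\<Sum>h\<in>{f \<in> walks (Suc (Suc n)) N. f 0 = x \<and> f (Suc n) = y}.
      \<Prod>t<Suc n. A $$ (h t, h (Suc t)))"
    by (rule sum.reindex_bij_witness[of _ "\<lambda>h. h(Suc n := undefined)" "\<lambda>f. f(Suc n := y)"])
       (use Suc.prems in \<open>auto simp: S_def P_def walks_def PiE_iff extensional_def\<close>)
  finally show ?case .
qed

lemma mat_trace_pow_eq_sum_walks:
  fixes A :: "real mat"
  assumes A: "A \<in> carrier_mat N N" and n: "n \<ge> 1"
  shows "mat_trace (A ^\<^sub>m n) = (\<Sum>f\<in>walks n N. \<Prod>t<n. A $$ (f t, f (Suc t mod n)))"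
proof -
  define P where "P f = (\<Prod>t<n. A $$ (f t, f (Suc t)))" for f :: "nat \<Rightarrow> nat"
  have "mat_trace (A ^\<^sub>m n) = (\<Sum>x<N. (A ^\<^sub>m n) $$ (x, x))" using A by (simp add: mat_trace_def)
  also have "\<dots> = (\<Sum>x<N. \<Sum>f\<in>{f \<in> {f \<in> walks (Suc n) N. f n = f 0}. f 0 = x}. P f)"
    by (rule sum.cong[OF refl]) (simp add: index_mat_pow_eq_sum_walks[OF A] P_def conj_commute, metis)
  also have "\<dots> = (\<Sum>f\<in>{f \<in> walks (Suc n) N. f n = f 0}. P f)"
    by (rule sum.group) (auto simp: walks_def PiE_iff intro: finite_subset[OF _ finite_walks])
  also have "\<dots> = (\<Sum>f\<in>walks n N. \<Prod>t<n. A $$ (f t, f (Suc t mod n)))"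
  proof (rule sum.reindex_bij_witness[of _ "\<lambda>f. f(n := f 0)" "\<lambda>h. h(n := undefined)"])
    fix f assume f: "f \<in> {f \<in> walks (Suc n) N. f n = f 0}"
    show "(\<Prod>t<n. A $$ ((f(n := undefined)) t, (f(n := undefined)) (Suc t mod n))) = P f"
      unfolding P_def
    proof (rule prod.cong[OF refl])
      fix t assume "t \<in> {..<n}"
      then show "A $$ ((f(n := undefined)) t, (f(n := undefined)) (Suc t mod n)) = A $$ (f t, f (Suc t))"
        using f by (cases "Suc t = n") auto
    qed
  qed (use n in \<open>auto simp: walks_def PiE_iff extensional_def\<close>)
  finally show ?thesis .
qed

definition step :: "nat \<Rightarrow> (nat \<Rightarrow> nat) \<Rightarrow> nat \<Rightarrow> int" where
  "step n f t = int (f (Suc t mod n)) - int (f t)"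

definition step_length :: "nat \<Rightarrow> (nat \<Rightarrow> nat) \<Rightarrow> nat \<Rightarrow> nat" where
  "step_length n f t = nat \<bar>step n f t\<bar>"

definition length_multiplicity :: "nat \<Rightarrow> (nat \<Rightarrow> nat) \<Rightarrow> nat \<Rightarrow> nat" where
  "length_multiplicity n f v = card {t \<in> {..<n}. step_length n f t = v}"

lemma step_length_eq_iff: "step_length n f s = step_length n f t \<longleftrightarrow> \<bar>step n f s\<bar> = \<bar>step n f t\<bar>"
  by (simp add: step_length_def eq_nat_nat_iff)

lemma step_length_eq_0_iff: "step_length n f t = 0 \<longleftrightarrow> step n f t = 0"
  by (simp add: step_length_def)

lemma toeplitz_mat_walk_entry:
  assumes "f t < N" "f (Suc t mod n) < N"
  shows "toeplitz_mat X N \<omega> $$ (f t, f (Suc t mod n))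
    = (if step_length n f t = 0 then 0 else X (step_length n f t) \<omega>)"
  using assms by (auto simp: toeplitz_mat_def step_length_def step_def Let_def nat_diff_distrib)

lemma int_walk_eq_start_plus_steps:
  assumes "t < n"
  shows "int (f t) = int (f 0) + (\<Sum>s<t. step n f s)"
  using assms by (induction t) (simp_all add: step_def)

lemma sum_steps_eq_0:
  assumes "n \<ge> 1"
  shows "(\<Sum>s<n. step n f s) = 0"
proof -
  obtain m where m: "n = Suc m" using assms by (cases n) auto
  have "(\<Sum>s<n. step n f s) = (\<Sum>s<m. step n f s) + step n f m" by (simp add: m)
  also have "(\<Sum>s<m. step n f s) = int (f m) - int (f 0)"
    using int_walk_eq_start_plus_steps[of m n f] m by simp
  also have "step n f m = int (f 0) - int (f m)" by (simp add: step_def m)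
  finally show ?thesis by simp
qed

section \<open>Expected weights of walks\<close>

definition density_moment :: "(real \<Rightarrow> real) \<Rightarrow> nat \<Rightarrow> real" where
  "density_moment p m = (LINT x|lborel. x ^ m * p x)"

definition walk_weight :: "(nat \<Rightarrow> 'a \<Rightarrow> real) \<Rightarrow> nat \<Rightarrow> (nat \<Rightarrow> nat) \<Rightarrow> 'a \<Rightarrow> real" where
  "walk_weight X n f \<omega> = (\<Prod>t<n. if step_length n f t = 0 then 0 else X (step_length n f t) \<omega>)"

definition walk_moment :: "(real \<Rightarrow> real) \<Rightarrow> nat \<Rightarrow> (nat \<Rightarrow> nat) \<Rightarrow> real" where
  "walk_moment p n f = (if \<exists>t<n. step_length n f t = 0 then 0
     else \<Prod>v\<in>step_length n f ` {..<n}. density_moment p (length_multiplicity n f v))"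

lemma prod_eq_prod_image_power:
  fixes Y :: "'b \<Rightarrow> 'c::comm_monoid_mult"
  assumes "finite A"
  shows "(\<Prod>t\<in>A. Y (g t)) = (\<Prod>v\<in>g ` A. Y v ^ card {t\<in>A. g t = v})"
proof -
  have "(\<Prod>t\<in>A. Y (g t)) = (\<Prod>v\<in>g ` A. \<Prod>t\<in>{t\<in>A. g t = v}. Y (g t))"
    by (rule prod.group[symmetric]) (use assms in auto)
  also have "\<dots> = (\<Prod>v\<in>g ` A. Y v ^ card {t\<in>A. g t = v})"
    by (rule prod.cong[OF refl]) simp
  finally show ?thesis .
qed

lemma moment_AN_eq_sum_walk_weight:
  assumes "n \<ge> 1"
  shows "moment_AN X n N \<omega> = real N powr (-(real n / 2 + 1)) * (\<Sum>f\<in>walks n N. walk_weight X n f \<omega>)"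
proof -
  have "toeplitz_mat X N \<omega> \<in> carrier_mat N N" by (simp add: toeplitz_mat_def)
  then have "mat_trace (toeplitz_mat X N \<omega> ^\<^sub>m n)
      = (\<Sum>f\<in>walks n N. \<Prod>t<n. toeplitz_mat X N \<omega> $$ (f t, f (Suc t mod n)))"
    using assms by (rule mat_trace_pow_eq_sum_walks)
  also have "\<dots> = (\<Sum>f\<in>walks n N. walk_weight X n f \<omega>)"
    unfolding walk_weight_def using assms
    by (intro sum.cong prod.cong refl toeplitz_mat_walk_entry) (auto simp: walks_def PiE_iff)
  finally show ?thesis by (simp add: moment_AN_def)
qed

locale iid_toeplitz = prob_space M for M :: "'a measure" +
  fixes X :: "nat \<Rightarrow> 'a \<Rightarrow> real" and p :: "real \<Rightarrow> real"
  assumes indep: "indep_vars (\<lambda>_. borel) X {1..}"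
    and distr: "\<And>j. j \<ge> 1 \<Longrightarrow> distributed M lborel (X j) (\<lambda>x. ennreal (p x))"
    and density_nonneg: "\<And>x. p x \<ge> 0"
    and integrable_moments: "\<And>m::nat. integrable lborel (\<lambda>x. x ^ m * p x)"
begin

lemma
  assumes "j \<ge> 1"
  shows integrable_power_X: "integrable M (\<lambda>\<omega>. X j \<omega> ^ m)"
    and expectation_power_X: "expectation (\<lambda>\<omega>. X j \<omega> ^ m) = density_moment p m"
proof -
  have D: "distributed M lborel (X j) (\<lambda>x. ennreal (p x))" by (rule distr[OF assms])
  have "integrable lborel (\<lambda>x. p x * x ^ m)" using integrable_moments[of m] by (simp add: mult.commute)
  then show "integrable M (\<lambda>\<omega>. X j \<omega> ^ m)"
    using distributed_integrable[OF D, of "\<lambda>x. x ^ m"] density_nonneg by simp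
  show "expectation (\<lambda>\<omega>. X j \<omega> ^ m) = density_moment p m"
    using distributed_integral[OF D, of "\<lambda>x. x ^ m"] density_nonneg
    by (simp add: density_moment_def mult.commute)
qed

text \<open>If no step has length \<open>0\<close>, the weight is a product of powers \<open>X v ^ length_multiplicity n f v\<close>
  of distinct, hence independent, entries.\<close>
lemma
  shows integrable_walk_weight: "integrable M (walk_weight X n f)"
    and expectation_walk_weight: "expectation (walk_weight X n f) = walk_moment p n f"
proof -
  have "integrable M (walk_weight X n f) \<and> expectation (walk_weight X n f) = walk_moment p n f"
  proof (cases "\<exists>t<n. step_length n f t = 0")
    case True
    then have "walk_weight X n f = (\<lambda>_. 0)" by (force simp: walk_weight_def fun_eq_iff)
    then show ?thesis using True by (simp add: walk_moment_def)
  next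
    case False
    define V where "V = step_length n f ` {..<n}"
    have V: "V \<subseteq> {1..}" "finite V" using False by (auto simp: V_def)
    have "walk_weight X n f \<omega> = (\<Prod>v\<in>V. X v \<omega> ^ length_multiplicity n f v)" for \<omega>
    proof -
      have "walk_weight X n f \<omega> = (\<Prod>t<n. X (step_length n f t) \<omega>)"
        using False by (auto simp: walk_weight_def intro!: prod.cong)
      also have "\<dots> = (\<Prod>v\<in>V. X v \<omega> ^ length_multiplicity n f v)"
        unfolding V_def length_multiplicity_def by (rule prod_eq_prod_image_power) simp
      finally show ?thesis .
    qed
    then have weight: "walk_weight X n f = (\<lambda>\<omega>. \<Prod>v\<in>V. X v \<omega> ^ length_multiplicity n f v)"
      by (intro ext)
    have indep_powers: "indep_vars (\<lambda>_. borel) (\<lambda>v \<omega>. X v \<omega> ^ length_multiplicity n f v) V"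
      by (rule indep_vars_compose2[where X=X and M'="\<lambda>_. borel"])
         (auto intro: indep_vars_subset[OF indep V(1)])
    have "\<And>v. v \<in> V \<Longrightarrow> integrable M (\<lambda>\<omega>. X v \<omega> ^ length_multiplicity n f v)"
      using integrable_power_X V by auto
    note integrable = this
    show ?thesis
      unfolding weight
      using indep_vars_integrable[OF V(2) indep_powers integrable]
        indep_vars_lebesgue_integral[OF V(2) indep_powers integrable]
        expectation_power_X V False
      by (auto simp: walk_moment_def V_def intro!: prod.cong)
  qed
  then show "integrable M (walk_weight X n f)" "expectation (walk_weight X n f) = walk_moment p n f"
    by auto
qed

lemma moment_N_eq_sum_walk_moment:
  assumes "n \<ge> 1"
  shows "moment_N M X n N = real N powr (-(real n / 2 + 1)) * (\<Sum>f\<in>walks n N. walk_moment p n f)"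
proof -
  have "moment_N M X n N
      = expectation (\<lambda>\<omega>. real N powr (-(real n / 2 + 1)) * (\<Sum>f\<in>walks n N. walk_weight X n f \<omega>))"
    unfolding moment_N_def moment_AN_eq_sum_walk_weight[OF assms] ..
  also have "\<dots> = real N powr (-(real n / 2 + 1)) * (\<Sum>f\<in>walks n N. expectation (walk_weight X n f))"
    using integrable_walk_weight by simp
  finally show ?thesis by (simp add: expectation_walk_weight)
qed

end

section \<open>Walks with a prescribed step pattern\<close>

text \<open>A step pattern \<open>\<mu>\<close> maps every time \<open>t < n\<close> to the representative of its class; together
  with signs \<open>\<epsilon>\<close> it prescribes \<open>step t = \<epsilon> t * step (\<mu> t)\<close>. A walk following the pattern is
  determined by its coordinates: the start vertex (stored at index \<open>n\<close>) and the steps at the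
  representatives.\<close>
definition step_pattern :: "nat \<Rightarrow> (nat \<Rightarrow> nat) \<Rightarrow> bool" where
  "step_pattern n \<mu> \<longleftrightarrow> (\<forall>t<n. \<mu> t < n \<and> \<mu> (\<mu> t) = \<mu> t)"

definition pattern_reps :: "nat \<Rightarrow> (nat \<Rightarrow> nat) \<Rightarrow> nat set" where
  "pattern_reps n \<mu> = {a. a < n \<and> \<mu> a = a}"

definition pattern_walks :: "nat \<Rightarrow> (nat \<Rightarrow> nat) \<Rightarrow> (nat \<Rightarrow> int) \<Rightarrow> nat \<Rightarrow> (nat \<Rightarrow> nat) set" where
  "pattern_walks n \<mu> \<epsilon> N = {g \<in> walks n N. \<forall>t<n. \<mu> t \<noteq> t \<longrightarrow> step n g t = \<epsilon> t * step n g (\<mu> t)}"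

definition pattern_coords :: "nat \<Rightarrow> (nat \<Rightarrow> nat) \<Rightarrow> nat set" where
  "pattern_coords n \<mu> = insert n (pattern_reps n \<mu>)"

definition walk_coords :: "nat \<Rightarrow> (nat \<Rightarrow> nat) \<Rightarrow> (nat \<Rightarrow> nat) \<Rightarrow> nat \<Rightarrow> int" where
  "walk_coords n \<mu> g = (\<lambda>i. if i = n then int (g 0) else if i < n \<and> \<mu> i = i then step n g i else undefined)"

definition coords_step :: "(nat \<Rightarrow> nat) \<Rightarrow> (nat \<Rightarrow> int) \<Rightarrow> nat \<Rightarrow> (nat \<Rightarrow> int) \<Rightarrow> int" where
  "coords_step \<mu> \<epsilon> s z = (if \<mu> s = s then z s else \<epsilon> s * z (\<mu> s))"

definition coords_vertex :: "nat \<Rightarrow> (nat \<Rightarrow> nat) \<Rightarrow> (nat \<Rightarrow> int) \<Rightarrow> nat \<Rightarrow> (nat \<Rightarrow> int) \<Rightarrow> int" where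
  "coords_vertex n \<mu> \<epsilon> t z = z n + (\<Sum>s<t. coords_step \<mu> \<epsilon> s z)"

lemma finite_pattern_reps: "finite (pattern_reps n \<mu>)"
  by (simp add: pattern_reps_def)

lemma finite_pattern_coords: "finite (pattern_coords n \<mu>)"
  by (simp add: pattern_coords_def finite_pattern_reps)

lemma card_pattern_coords: "card (pattern_coords n \<mu>) = Suc (card (pattern_reps n \<mu>))"
  by (simp add: pattern_coords_def pattern_reps_def)

lemma finite_pattern_walks: "finite (pattern_walks n \<mu> \<epsilon> N)"
  by (rule finite_subset[OF _ finite_walks]) (auto simp: pattern_walks_def)

lemma coords_vertex_linear:
  "coords_vertex n \<mu> \<epsilon> t (\<lambda>i. m * w i + r i) = m * coords_vertex n \<mu> \<epsilon> t w + coords_vertex n \<mu> \<epsilon> t r"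
proof -
  have "coords_step \<mu> \<epsilon> u (\<lambda>i. m * w i + r i) = m * coords_step \<mu> \<epsilon> u w + coords_step \<mu> \<epsilon> u r" for u
    by (simp add: coords_step_def algebra_simps)
  then show ?thesis by (simp add: coords_vertex_def sum.distrib sum_distrib_left algebra_simps)
qed

lemma coords_step_walk_coords:
  assumes "step_pattern n \<mu>" "g \<in> pattern_walks n \<mu> \<epsilon> N" "s < n"
  shows "coords_step \<mu> \<epsilon> s (walk_coords n \<mu> g) = step n g s"
  using assms by (auto simp: coords_step_def walk_coords_def pattern_walks_def step_pattern_def)

lemma coords_vertex_walk_coords:
  assumes "step_pattern n \<mu>" "g \<in> pattern_walks n \<mu> \<epsilon> N" "t < n"
  shows "coords_vertex n \<mu> \<epsilon> t (walk_coords n \<mu> g) = int (g t)"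
  using assms coords_step_walk_coords[OF assms(1,2)] int_walk_eq_start_plus_steps[OF assms(3)]
  by (simp add: coords_vertex_def walk_coords_def)

lemma inj_on_walk_coords:
  assumes "step_pattern n \<mu>"
  shows "inj_on (walk_coords n \<mu>) (pattern_walks n \<mu> \<epsilon> N)"
proof (rule inj_onI)
  fix g g' assume g: "g \<in> pattern_walks n \<mu> \<epsilon> N" and g': "g' \<in> pattern_walks n \<mu> \<epsilon> N"
    and eq: "walk_coords n \<mu> g = walk_coords n \<mu> g'"
  have "\<And>t. t \<in> {..<n} \<Longrightarrow> g t = g' t"
    using coords_vertex_walk_coords[OF assms g] coords_vertex_walk_coords[OF assms g'] eq
    by (metis lessThan_iff of_nat_eq_iff)
  moreover have "g \<in> walks n N" "g' \<in> walks n N" using g g' by (auto simp: pattern_walks_def)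
  ultimately show "g = g'" unfolding walks_def by (metis PiE_ext)
qed

lemma walk_coords_in_PiE:
  assumes g: "g \<in> walks n N" and n: "n \<ge> 1"
  shows "walk_coords n \<mu> g \<in> PiE (pattern_coords n \<mu>) (\<lambda>_. {-int N..int N})"
proof (rule abs_le_in_PiE)
  fix i assume i: "i \<in> pattern_coords n \<mu>"
  have bounded: "\<And>j. j < n \<Longrightarrow> g j < N" using g by (auto simp: walks_def PiE_iff)
  show "\<bar>walk_coords n \<mu> g i\<bar> \<le> int N"
  proof (cases "i = n")
    case True
    then show ?thesis using bounded[of 0] n by (simp add: walk_coords_def)
  next
    case False
    then have "i < n" "\<mu> i = i" using i by (auto simp: pattern_coords_def pattern_reps_def)
    moreover have "Suc i mod n < n" using n by simp
    ultimately show ?thesis using False bounded[of i] bounded[of "Suc i mod n"]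
      by (auto simp: walk_coords_def step_def)
  qed
qed (auto simp: walk_coords_def pattern_coords_def pattern_reps_def extensional_def)

lemma card_pattern_walks_le:
  assumes "step_pattern n \<mu>" "n \<ge> 1"
  shows "card (pattern_walks n \<mu> \<epsilon> N) \<le> (2 * N + 1) ^ Suc (card (pattern_reps n \<mu>))"
proof -
  have "card (pattern_walks n \<mu> \<epsilon> N) = card (walk_coords n \<mu> ` pattern_walks n \<mu> \<epsilon> N)"
    using card_image[OF inj_on_walk_coords[OF assms(1)]] by simp
  also have "\<dots> \<le> card (PiE (pattern_coords n \<mu>) (\<lambda>_. {-int N..int N}))"
  proof (rule card_mono)
    show "walk_coords n \<mu> ` pattern_walks n \<mu> \<epsilon> N \<subseteq> PiE (pattern_coords n \<mu>) (\<lambda>_. {-int N..int N})"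
      by (rule image_subsetI, rule walk_coords_in_PiE[OF _ assms(2)]) (simp add: pattern_walks_def)
  qed (auto intro: finite_PiE finite_pattern_coords)
  also have "\<dots> = card {-int N..int N} ^ card (pattern_coords n \<mu>)"
    by (simp add: card_PiE finite_pattern_coords)
  also have "card {-int N..int N} = 2 * N + 1" by simp
  finally show ?thesis by (simp only: card_pattern_coords)
qed

lemma card_pattern_walks_level_set_le:
  assumes "step_pattern n \<mu>" "n \<ge> 1" "i \<in> pattern_coords n \<mu>"
    and determined: "\<And>z z'. \<forall>j\<in>pattern_coords n \<mu> - {i}. z j = z' j \<Longrightarrow> G z = G z' \<Longrightarrow> z i = z' i"
    and level: "\<And>g. g \<in> S \<Longrightarrow> G (walk_coords n \<mu> g) = 0"
    and "S \<subseteq> pattern_walks n \<mu> \<epsilon> N"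
  shows "card S \<le> (2 * N + 1) ^ card (pattern_reps n \<mu>)"
proof -
  let ?box = "PiE (pattern_coords n \<mu>) (\<lambda>_. {-int N..int N})"
  have "card S = card (walk_coords n \<mu> ` S)"
    using card_image[OF inj_on_subset[OF inj_on_walk_coords[OF assms(1)] assms(6)]] by simp
  also have "\<dots> \<le> card {z \<in> ?box. G z = 0}"
  proof (rule card_mono)
    show "walk_coords n \<mu> ` S \<subseteq> {z \<in> ?box. G z = 0}"
    proof (rule image_subsetI)
      fix g assume g: "g \<in> S"
      then have "g \<in> walks n N" using assms(6) by (auto simp: pattern_walks_def)
      then have "walk_coords n \<mu> g \<in> ?box" by (rule walk_coords_in_PiE[OF _ assms(2)])
      then show "walk_coords n \<mu> g \<in> {z \<in> ?box. G z = 0}" using level[OF g] by simp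
    qed
  qed (auto intro: finite_subset[of _ ?box] finite_PiE finite_pattern_coords)
  also have "\<dots> \<le> card {-int N..int N} ^ (card (pattern_coords n \<mu>) - 1)"
    by (rule card_PiE_level_set_le[where i=i]) (simp_all add: finite_pattern_coords assms(3) determined)
  also have "card {-int N..int N} = 2 * N + 1" by simp
  finally show ?thesis by (simp only: card_pattern_coords diff_Suc_1)
qed

section \<open>Pairings\<close>

definition pairings_on :: "'a set \<Rightarrow> ('a \<Rightarrow> 'a) set" where
  "pairings_on S = {\<sigma>. (\<forall>x\<in>S. \<sigma> x \<in> S \<and> \<sigma> x \<noteq> x \<and> \<sigma> (\<sigma> x) = x) \<and> (\<forall>x. x \<notin> S \<longrightarrow> \<sigma> x = x)}"

abbreviation pairings :: "nat \<Rightarrow> (nat \<Rightarrow> nat) set" where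
  "pairings n \<equiv> pairings_on {..<n}"

lemma pairings_onD:
  assumes "\<sigma> \<in> pairings_on S" "x \<in> S"
  shows "\<sigma> x \<in> S" "\<sigma> x \<noteq> x" "\<sigma> (\<sigma> x) = x"
  using assms by (auto simp: pairings_on_def)

lemma pairings_on_outside: "\<sigma> \<in> pairings_on S \<Longrightarrow> x \<notin> S \<Longrightarrow> \<sigma> x = x"
  by (simp add: pairings_on_def)

lemma finite_pairings_on:
  assumes "finite S"
  shows "finite (pairings_on S)"
proof -
  have "pairings_on S \<subseteq> (\<lambda>g x. if x \<in> S then g x else x) ` PiE S (\<lambda>_. S)"
  proof
    fix \<sigma> assume \<sigma>: "\<sigma> \<in> pairings_on S"
    then have "\<sigma> = (\<lambda>x. if x \<in> S then restrict \<sigma> S x else x)" "restrict \<sigma> S \<in> PiE S (\<lambda>_. S)"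
      by (auto simp: pairings_on_def fun_eq_iff)
    then show "\<sigma> \<in> (\<lambda>g x. if x \<in> S then g x else x) ` PiE S (\<lambda>_. S)" by blast
  qed
  then show ?thesis by (rule finite_subset) (auto intro: finite_PiE assms)
qed

lemma remove_pair_in_pairings_on:
  assumes \<sigma>: "\<sigma> \<in> pairings_on S" and x: "x \<in> S" and y: "y = \<sigma> x"
  shows "\<sigma>(x := x, y := y) \<in> pairings_on (S - {x, y})"
proof -
  let ?\<tau> = "\<sigma>(x := x, y := y)"
  have "?\<tau> z \<in> S - {x, y} \<and> ?\<tau> z \<noteq> z \<and> ?\<tau> (?\<tau> z) = z" if z: "z \<in> S - {x, y}" for z
  proof -
    have "\<sigma> z \<in> S" "\<sigma> z \<noteq> z" "\<sigma> (\<sigma> z) = z" using pairings_onD[OF \<sigma>] z by auto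
    moreover have "\<sigma> z \<noteq> x" "\<sigma> z \<noteq> y"
      using z y pairings_onD(3)[OF \<sigma> x] \<open>\<sigma> (\<sigma> z) = z\<close> by force+
    ultimately show ?thesis using z by auto
  qed
  moreover have "?\<tau> z = z" if "z \<notin> S - {x, y}" for z
    using that pairings_on_outside[OF \<sigma>] by auto
  ultimately show ?thesis unfolding pairings_on_def by blast
qed

lemma card_pairings_on_partner_le:
  assumes S: "finite S" and x: "x \<in> S"
  shows "card {\<sigma> \<in> pairings_on S. \<sigma> x = y} \<le> card (pairings_on (S - {x, y}))"
proof -
  let ?A = "{\<sigma> \<in> pairings_on S. \<sigma> x = y}"
  have "inj_on (\<lambda>\<sigma>. \<sigma>(x := x, y := y)) ?A"
  proof (rule inj_onI)
    fix \<sigma> \<tau> assume "\<sigma> \<in> ?A" "\<tau> \<in> ?A" and eq: "\<sigma>(x := x, y := y) = \<tau>(x := x, y := y)"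
    then have "\<sigma> x = \<tau> x" "\<sigma> y = \<tau> y"
      using x pairings_onD(3)[of \<sigma> S x] pairings_onD(3)[of \<tau> S x] by auto
    show "\<sigma> = \<tau>"
    proof
      fix z show "\<sigma> z = \<tau> z"
        using fun_cong[OF eq, of z] \<open>\<sigma> x = \<tau> x\<close> \<open>\<sigma> y = \<tau> y\<close> by (cases "z = x \<or> z = y") auto
    qed
  qed
  then have "card ?A = card ((\<lambda>\<sigma>. \<sigma>(x := x, y := y)) ` ?A)" by (simp add: card_image)
  also have "\<dots> \<le> card (pairings_on (S - {x, y}))"
  proof (intro card_mono finite_pairings_on)
    show "(\<lambda>\<sigma>. \<sigma>(x := x, y := y)) ` ?A \<subseteq> pairings_on (S - {x, y})"
      using remove_pair_in_pairings_on[OF _ x] by blast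
  qed (use S in simp)
  finally show ?thesis .
qed

text \<open>Classifying by the partner of a chosen element gives the recursion behind \<open>(2m-1)!!\<close>.\<close>
lemma card_pairings_on_le:
  assumes "finite S" "card S = 2 * m"
  shows "card (pairings_on S) \<le> (\<Prod>i<m. 2 * i + 1)"
  using assms
proof (induction m arbitrary: S)
  case 0
  then have "pairings_on S = {id}" by (auto simp: pairings_on_def fun_eq_iff)
  then show ?case by simp
next
  case (Suc m)
  then obtain x where x: "x \<in> S" by fastforce
  let ?A = "\<lambda>y. {\<sigma> \<in> pairings_on S. \<sigma> x = y}"
  have card_A: "card (?A y) \<le> (\<Prod>i<m. 2 * i + 1)" if y: "y \<in> S - {x}" for y
  proof -
    have "card {x, y} = 2" using y by auto
    then have "card (S - {x, y}) = 2 * m" using Suc.prems x y by (simp add: card_Diff_subset)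
    then have "card (pairings_on (S - {x, y})) \<le> (\<Prod>i<m. 2 * i + 1)"
      using Suc.prems(1) by (intro Suc.IH) auto
    then show ?thesis using card_pairings_on_partner_le[OF Suc.prems(1) x, of y] by linarith
  qed
  have cover: "pairings_on S = (\<Union>y\<in>S - {x}. ?A y)" using x by (auto simp: pairings_on_def)
  have "card (\<Union>y\<in>S - {x}. ?A y) \<le> (\<Sum>y\<in>S - {x}. card (?A y))"
    by (rule card_UN_le) (use Suc.prems(1) in simp)
  then have "card (pairings_on S) \<le> (\<Sum>y\<in>S - {x}. card (?A y))"
    by (simp only: cover[symmetric])
  also have "\<dots> \<le> (\<Sum>y\<in>S - {x}. \<Prod>i<m. 2 * i + 1)" by (rule sum_mono) (rule card_A)
  also have "\<dots> = (\<Prod>i<Suc m. 2 * i + 1)" using Suc.prems x by simp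
  finally show ?case .
qed

lemma card_pairings_le: "card (pairings (2 * k)) \<le> odd_double_fact k"
  unfolding odd_double_fact_def by (rule card_pairings_on_le) auto

definition pairing_walks :: "nat \<Rightarrow> (nat \<Rightarrow> nat) \<Rightarrow> nat \<Rightarrow> (nat \<Rightarrow> nat) set" where
  "pairing_walks n \<sigma> N = {f \<in> walks n N. \<forall>t<n. step n f (\<sigma> t) = - step n f t}"

definition pairing_openers :: "nat \<Rightarrow> (nat \<Rightarrow> nat) \<Rightarrow> nat set" where
  "pairing_openers n \<sigma> = {a. a < n \<and> a < \<sigma> a}"

definition pairing_closers :: "nat \<Rightarrow> (nat \<Rightarrow> nat) \<Rightarrow> nat set" where
  "pairing_closers n \<sigma> = {a. a < n \<and> \<sigma> a < a}"

definition pairing_pattern :: "(nat \<Rightarrow> nat) \<Rightarrow> nat \<Rightarrow> nat" where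
  "pairing_pattern \<sigma> t = min t (\<sigma> t)"

definition pairing_signs :: "(nat \<Rightarrow> nat) \<Rightarrow> nat \<Rightarrow> int" where
  "pairing_signs \<sigma> t = (if \<sigma> t < t then -1 else 1)"

lemma pattern_reps_pairing_pattern:
  assumes "\<sigma> \<in> pairings n"
  shows "pattern_reps n (pairing_pattern \<sigma>) = pairing_openers n \<sigma>"
proof -
  have "t \<le> \<sigma> t \<longleftrightarrow> t < \<sigma> t" if "t < n" for t
    using pairings_onD(2)[OF assms, of t] that by auto
  then show ?thesis by (auto simp: pattern_reps_def pairing_pattern_def pairing_openers_def min_def)
qed

lemma step_pattern_pairing_pattern: "\<sigma> \<in> pairings n \<Longrightarrow> step_pattern n (pairing_pattern \<sigma>)"
  by (auto simp: step_pattern_def pairing_pattern_def pairings_on_def min_def)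

lemma pairing_walks_eq_pattern_walks:
  assumes \<sigma>: "\<sigma> \<in> pairings n"
  shows "pairing_walks n \<sigma> N = pattern_walks n (pairing_pattern \<sigma>) (pairing_signs \<sigma>) N"
proof -
  have "(\<forall>t<n. step n f (\<sigma> t) = - step n f t) \<longleftrightarrow>
    (\<forall>t<n. pairing_pattern \<sigma> t \<noteq> t \<longrightarrow> step n f t = pairing_signs \<sigma> t * step n f (pairing_pattern \<sigma> t))"
    for f
  proof (intro iffI allI impI)
    fix t assume h: "\<forall>t<n. step n f (\<sigma> t) = - step n f t" and t: "t < n" "pairing_pattern \<sigma> t \<noteq> t"
    then have "\<sigma> t < t" by (simp add: pairing_pattern_def min_def split: if_splits)
    moreover have "\<sigma> t < n" "\<sigma> (\<sigma> t) = t" using pairings_onD[OF \<sigma>] t by auto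
    ultimately show "step n f t = pairing_signs \<sigma> t * step n f (pairing_pattern \<sigma> t)"
      using h[rule_format, of "\<sigma> t"] by (simp add: pairing_pattern_def pairing_signs_def)
  next
    fix t assume h: "\<forall>t<n. pairing_pattern \<sigma> t \<noteq> t \<longrightarrow>
        step n f t = pairing_signs \<sigma> t * step n f (pairing_pattern \<sigma> t)" and t: "t < n"
    have \<sigma>t: "\<sigma> t < n" "\<sigma> t \<noteq> t" "\<sigma> (\<sigma> t) = t" using pairings_onD[OF \<sigma>] t by auto
    show "step n f (\<sigma> t) = - step n f t"
    proof (cases "\<sigma> t < t")
      case True
      then show ?thesis using h[rule_format, of t] t by (simp add: pairing_pattern_def pairing_signs_def)
    next
      case False
      then have "t < \<sigma> t" using \<sigma>t(2) by simp
      then show ?thesis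
        using h[rule_format, of "\<sigma> t"] \<sigma>t by (simp add: pairing_pattern_def pairing_signs_def)
    qed
  qed
  then show ?thesis by (auto simp: pairing_walks_def pattern_walks_def)
qed

lemma
  assumes \<sigma>: "\<sigma> \<in> pairings n"
  shows pairing_openers_Int_closers: "pairing_openers n \<sigma> \<inter> pairing_closers n \<sigma> = {}"
    and pairing_openers_Un_closers: "pairing_openers n \<sigma> \<union> pairing_closers n \<sigma> = {..<n}"
    and bij_betw_pairing_closers_openers: "bij_betw \<sigma> (pairing_closers n \<sigma>) (pairing_openers n \<sigma>)"
proof -
  show "pairing_openers n \<sigma> \<inter> pairing_closers n \<sigma> = {}"
    by (auto simp: pairing_openers_def pairing_closers_def)
  have "x < \<sigma> x \<or> \<sigma> x < x" if "x < n" for x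
    using pairings_onD(2)[OF \<sigma>, of x] that by (auto simp: nat_neq_iff)
  then show "pairing_openers n \<sigma> \<union> pairing_closers n \<sigma> = {..<n}"
    by (auto simp: pairing_openers_def pairing_closers_def)
  show "bij_betw \<sigma> (pairing_closers n \<sigma>) (pairing_openers n \<sigma>)"
    by (rule bij_betw_byWitness[where f'=\<sigma>])
       (use pairings_onD[OF \<sigma>] in \<open>fastforce simp: pairing_openers_def pairing_closers_def\<close>)+
qed

lemma card_pairing_openers:
  assumes \<sigma>: "\<sigma> \<in> pairings (2 * k)"
  shows "card (pairing_openers (2 * k) \<sigma>) = k"
proof -
  have fin: "finite (pairing_openers (2 * k) \<sigma>)" "finite (pairing_closers (2 * k) \<sigma>)"
    by (auto simp: pairing_openers_def pairing_closers_def)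
  have "card (pairing_closers (2 * k) \<sigma>) = card (pairing_openers (2 * k) \<sigma>)"
    using bij_betw_same_card[OF bij_betw_pairing_closers_openers[OF \<sigma>]] .
  moreover have "card (pairing_openers (2 * k) \<sigma>) + card (pairing_closers (2 * k) \<sigma>) = 2 * k"
    using card_Un_disjoint[OF fin pairing_openers_Int_closers[OF \<sigma>]] pairing_openers_Un_closers[OF \<sigma>]
    by simp
  ultimately show ?thesis by simp
qed

text \<open>The closing step of each pair cancels its opening step.\<close>
lemma sum_coords_step_pairing_pattern:
  assumes \<sigma>: "\<sigma> \<in> pairings n"
  shows "(\<Sum>s<n. coords_step (pairing_pattern \<sigma>) (pairing_signs \<sigma>) s z) = 0"
proof -
  let ?D = "\<lambda>s. coords_step (pairing_pattern \<sigma>) (pairing_signs \<sigma>) s z"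
  have fin: "finite (pairing_openers n \<sigma>)" "finite (pairing_closers n \<sigma>)"
    by (auto simp: pairing_openers_def pairing_closers_def)
  have "(\<Sum>s<n. ?D s) = (\<Sum>s\<in>pairing_openers n \<sigma>. ?D s) + (\<Sum>s\<in>pairing_closers n \<sigma>. ?D s)"
    using sum.union_disjoint[OF fin pairing_openers_Int_closers[OF \<sigma>]] pairing_openers_Un_closers[OF \<sigma>]
    by simp
  also have "(\<Sum>s\<in>pairing_openers n \<sigma>. ?D s) = (\<Sum>s\<in>pairing_openers n \<sigma>. z s)"
    by (rule sum.cong) (auto simp: coords_step_def pairing_pattern_def pairing_openers_def)
  also have "(\<Sum>s\<in>pairing_closers n \<sigma>. ?D s) = (\<Sum>s\<in>pairing_closers n \<sigma>. - z (\<sigma> s))"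
    by (rule sum.cong)
       (auto simp: coords_step_def pairing_pattern_def pairing_signs_def pairing_closers_def min_def)
  also have "\<dots> = - (\<Sum>s\<in>pairing_closers n \<sigma>. z (\<sigma> s))" by (rule sum_negf)
  also have "(\<Sum>s\<in>pairing_closers n \<sigma>. z (\<sigma> s)) = (\<Sum>a\<in>pairing_openers n \<sigma>. z a)"
    by (rule sum.reindex_bij_betw[OF bij_betw_pairing_closers_openers[OF \<sigma>]])
  finally show ?thesis by simp
qed

section \<open>Walks respecting a pairing\<close>

locale pairing_lattice =
  fixes n :: nat and \<sigma> :: "nat \<Rightarrow> nat"
  assumes pairing: "\<sigma> \<in> pairings n" and n_pos: "n \<ge> 1"
begin

lemma coords_step_local:
  assumes "u < n" "\<And>i. i \<in> pattern_coords n (pairing_pattern \<sigma>) - {n} \<Longrightarrow> z i = z' i"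
  shows "coords_step (pairing_pattern \<sigma>) (pairing_signs \<sigma>) u z
    = coords_step (pairing_pattern \<sigma>) (pairing_signs \<sigma>) u z'"
  using assms step_pattern_pairing_pattern[OF pairing]
  by (auto simp: coords_step_def pattern_coords_def pattern_reps_def step_pattern_def)

lemma coords_vertex_local:
  assumes "\<And>i. i \<in> pattern_coords n (pairing_pattern \<sigma>) \<Longrightarrow> z i = z' i" "t < n"
  shows "coords_vertex n (pairing_pattern \<sigma>) (pairing_signs \<sigma>) t z
    = coords_vertex n (pairing_pattern \<sigma>) (pairing_signs \<sigma>) t z'"
proof -
  have "coords_step (pairing_pattern \<sigma>) (pairing_signs \<sigma>) u z
      = coords_step (pairing_pattern \<sigma>) (pairing_signs \<sigma>) u z'" if "u < t" for u
    using that assms by (intro coords_step_local) auto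
  moreover have "z n = z' n" using assms by (simp add: pattern_coords_def)
  ultimately show ?thesis by (simp add: coords_vertex_def)
qed

lemma abs_coords_vertex_le:
  assumes t: "t < n" and r: "\<And>i. i \<in> pattern_coords n (pairing_pattern \<sigma>) \<Longrightarrow> \<bar>r i\<bar> \<le> R"
  shows "\<bar>coords_vertex n (pairing_pattern \<sigma>) (pairing_signs \<sigma>) t r\<bar> \<le> int n * R"
proof -
  let ?D = "\<lambda>u. coords_step (pairing_pattern \<sigma>) (pairing_signs \<sigma>) u r"
  have R: "\<bar>r n\<bar> \<le> R" using r by (simp add: pattern_coords_def)
  have D: "\<bar>?D u\<bar> \<le> R" if "u < n" for u
    using step_pattern_pairing_pattern[OF pairing] that r
    by (auto simp: coords_step_def pairing_signs_def abs_mult step_pattern_def pattern_coords_def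
        pattern_reps_def)
  have "\<bar>coords_vertex n (pairing_pattern \<sigma>) (pairing_signs \<sigma>) t r\<bar> \<le> \<bar>r n\<bar> + (\<Sum>u<t. \<bar>?D u\<bar>)"
    unfolding coords_vertex_def by (rule order.trans[OF abs_triangle_ineq]) (simp add: sum_abs)
  also have "\<dots> \<le> R + (\<Sum>u<t. R)" using R D t by (intro add_mono sum_mono) auto
  also have "\<dots> = (1 + int t) * R" by (simp add: algebra_simps)
  also have "\<dots> \<le> int n * R" using t R by (intro mult_right_mono) auto
  finally show ?thesis .
qed

text \<open>A coordinate at an opening time \<open>i\<close> is the difference of the vertices at times \<open>i\<close> and
  \<open>Suc i\<close>, which are both bounded.\<close>
lemma abs_coord_le:
  assumes bounded: "\<And>t. t < n \<Longrightarrow> \<bar>coords_vertex n (pairing_pattern \<sigma>) (pairing_signs \<sigma>) t z\<bar> \<le> R"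
    and i: "i \<in> pattern_coords n (pairing_pattern \<sigma>)"
  shows "\<bar>z i\<bar> \<le> 2 * R"
proof (cases "i = n")
  case True
  then show ?thesis using bounded[of 0] n_pos by (simp add: coords_vertex_def)
next
  case False
  then have i: "i < n" "pairing_pattern \<sigma> i = i" using i by (auto simp: pattern_coords_def pattern_reps_def)
  then have "i < \<sigma> i" "\<sigma> i < n" using pattern_reps_pairing_pattern[OF pairing] pairings_onD[OF pairing]
    by (auto simp: pattern_reps_def pairing_openers_def)
  then have "Suc i < n" by simp
  moreover have "coords_vertex n (pairing_pattern \<sigma>) (pairing_signs \<sigma>) (Suc i) z
      - coords_vertex n (pairing_pattern \<sigma>) (pairing_signs \<sigma>) i z = z i"
    using i by (simp add: coords_vertex_def coords_step_def)
  ultimately show ?thesis using bounded[of i] bounded[of "Suc i"] i by linarith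
qed

lemma coords_vertex_determines_start:
  assumes "\<forall>j\<in>pattern_coords n (pairing_pattern \<sigma>) - {n}. z j = z' j" "t < n"
    and "coords_vertex n (pairing_pattern \<sigma>) (pairing_signs \<sigma>) t z
      = coords_vertex n (pairing_pattern \<sigma>) (pairing_signs \<sigma>) t z'"
  shows "z n = z' n"
proof -
  have "coords_step (pairing_pattern \<sigma>) (pairing_signs \<sigma>) u z
      = coords_step (pairing_pattern \<sigma>) (pairing_signs \<sigma>) u z'" if "u < t" for u
    using that assms by (intro coords_step_local) auto
  then show ?thesis using assms(3) by (simp add: coords_vertex_def)
qed

sublocale lattice_count "pattern_coords n (pairing_pattern \<sigma>)" "{..<n}"
  "coords_vertex n (pairing_pattern \<sigma>) (pairing_signs \<sigma>)" "int n" 2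
proof
  show "finite (pattern_coords n (pairing_pattern \<sigma>))" by (rule finite_pattern_coords)
  show "pattern_coords n (pairing_pattern \<sigma>) \<noteq> {}" by (simp add: pattern_coords_def)
  show "finite {..<n}" "int n \<ge> 0" "(2::int) \<ge> 0" by simp_all
  show "coords_vertex n (pairing_pattern \<sigma>) (pairing_signs \<sigma>) t z
      = coords_vertex n (pairing_pattern \<sigma>) (pairing_signs \<sigma>) t z'"
    if "t \<in> {..<n}" "\<And>i. i \<in> pattern_coords n (pairing_pattern \<sigma>) \<Longrightarrow> z i = z' i" for t z z'
    using that by (intro coords_vertex_local) auto
  show "coords_vertex n (pairing_pattern \<sigma>) (pairing_signs \<sigma>) t (\<lambda>i. m * w i + r i)
      = m * coords_vertex n (pairing_pattern \<sigma>) (pairing_signs \<sigma>) t w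
        + coords_vertex n (pairing_pattern \<sigma>) (pairing_signs \<sigma>) t r" for t m w r
    by (rule coords_vertex_linear)
  show "\<bar>coords_vertex n (pairing_pattern \<sigma>) (pairing_signs \<sigma>) t r\<bar> \<le> int n * R"
    if "t \<in> {..<n}" "\<And>i. i \<in> pattern_coords n (pairing_pattern \<sigma>) \<Longrightarrow> \<bar>r i\<bar> \<le> R" for t r R
    using that by (intro abs_coords_vertex_le) auto
  show "\<bar>z i\<bar> \<le> 2 * R"
    if "\<And>t. t \<in> {..<n} \<Longrightarrow> \<bar>coords_vertex n (pairing_pattern \<sigma>) (pairing_signs \<sigma>) t z\<bar> \<le> R"
      "i \<in> pattern_coords n (pairing_pattern \<sigma>)" for z R i
    using that by (intro abs_coord_le) auto
  show "\<exists>i\<in>pattern_coords n (pairing_pattern \<sigma>). \<forall>z z'.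
      (\<forall>j\<in>pattern_coords n (pairing_pattern \<sigma>) - {i}. z j = z' j) \<longrightarrow>
      coords_vertex n (pairing_pattern \<sigma>) (pairing_signs \<sigma>) t z
        = coords_vertex n (pairing_pattern \<sigma>) (pairing_signs \<sigma>) t z' \<longrightarrow> z i = z' i"
    if "t \<in> {..<n}" for t
    using coords_vertex_determines_start[of _ _ t] that by (auto simp: pattern_coords_def)
qed

lemma walk_coords_in_points:
  assumes g: "g \<in> pairing_walks n \<sigma> N"
  shows "walk_coords n (pairing_pattern \<sigma>) g \<in> points N"
proof -
  have g': "g \<in> pattern_walks n (pairing_pattern \<sigma>) (pairing_signs \<sigma>) N" "g \<in> walks n N"
    using g pairing_walks_eq_pattern_walks[OF pairing] by (auto simp: pairing_walks_def)
  have "walk_coords n (pairing_pattern \<sigma>) g \<in> PiE (pattern_coords n (pairing_pattern \<sigma>)) (\<lambda>_. {-int N..int N})"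
    by (rule walk_coords_in_PiE[OF g'(2) n_pos])
  then have "walk_coords n (pairing_pattern \<sigma>) g
      \<in> PiE (pattern_coords n (pairing_pattern \<sigma>)) (\<lambda>_. {-(2 * int N)..2 * int N})"
    by (force simp: PiE_iff)
  moreover have "\<forall>t\<in>{..<n}. 0 \<le> coords_vertex n (pairing_pattern \<sigma>) (pairing_signs \<sigma>) t
      (walk_coords n (pairing_pattern \<sigma>) g) \<and> coords_vertex n (pairing_pattern \<sigma>) (pairing_signs \<sigma>) t
      (walk_coords n (pairing_pattern \<sigma>) g) < int N"
    using coords_vertex_walk_coords[OF step_pattern_pairing_pattern[OF pairing] g'(1)] g'(2)
    by (auto simp: walks_def PiE_iff)
  ultimately show ?thesis by (simp add: points_def)
qed

definition walk_of_coords :: "(nat \<Rightarrow> int) \<Rightarrow> nat \<Rightarrow> nat" where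
  "walk_of_coords z t =
    (if t < n then nat (coords_vertex n (pairing_pattern \<sigma>) (pairing_signs \<sigma>) t z) else undefined)"

lemma int_walk_of_coords:
  assumes "z \<in> points N" "t < n"
  shows "int (walk_of_coords z t) = coords_vertex n (pairing_pattern \<sigma>) (pairing_signs \<sigma>) t z"
  using assms by (simp add: walk_of_coords_def points_def)

lemma step_walk_of_coords:
  assumes z: "z \<in> points N" and t: "t < n"
  shows "step n (walk_of_coords z) t = coords_step (pairing_pattern \<sigma>) (pairing_signs \<sigma>) t z"
proof (cases "Suc t < n")
  case True
  then show ?thesis using int_walk_of_coords[OF z] t by (simp add: step_def coords_vertex_def)
next
  case False
  then have "Suc t = n" using t by simp
  then have "(\<Sum>s<t. coords_step (pairing_pattern \<sigma>) (pairing_signs \<sigma>) s z)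
      + coords_step (pairing_pattern \<sigma>) (pairing_signs \<sigma>) t z = 0"
    using sum_coords_step_pairing_pattern[OF pairing, of z] by (metis sum.lessThan_Suc)
  then show ?thesis
    using int_walk_of_coords[OF z, of 0] int_walk_of_coords[OF z t] \<open>Suc t = n\<close>
    by (simp add: step_def coords_vertex_def)
qed

lemma walk_of_coords_in_pairing_walks:
  assumes z: "z \<in> points N"
  shows "walk_of_coords z \<in> pairing_walks n \<sigma> N"
proof -
  have "walk_of_coords z t < N" if "t < n" for t
    using z that by (simp add: walk_of_coords_def points_def nat_less_iff)
  then have "walk_of_coords z \<in> walks n N"
    by (auto simp: walks_def walk_of_coords_def PiE_iff extensional_def)
  then have "walk_of_coords z \<in> pattern_walks n (pairing_pattern \<sigma>) (pairing_signs \<sigma>) N"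
    using step_walk_of_coords[OF z] step_pattern_pairing_pattern[OF pairing]
    by (auto simp: pattern_walks_def step_pattern_def coords_step_def)
  then show ?thesis using pairing_walks_eq_pattern_walks[OF pairing] by simp
qed

lemma walk_coords_walk_of_coords:
  assumes z: "z \<in> points N"
  shows "walk_coords n (pairing_pattern \<sigma>) (walk_of_coords z) = z"
proof
  fix i
  have z_box: "z \<in> PiE (pattern_coords n (pairing_pattern \<sigma>)) (\<lambda>_. {-(2 * int N)..2 * int N})"
    using z by (simp add: points_def)
  consider "i = n" | "i \<noteq> n" "i < n" "pairing_pattern \<sigma> i = i" | "i \<notin> pattern_coords n (pairing_pattern \<sigma>)"
    by (auto simp: pattern_coords_def pattern_reps_def)
  then show "walk_coords n (pairing_pattern \<sigma>) (walk_of_coords z) i = z i"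
  proof cases
    case 1
    then show ?thesis using int_walk_of_coords[OF z, of 0] n_pos by (simp add: walk_coords_def coords_vertex_def)
  next
    case 2
    then show ?thesis using step_walk_of_coords[OF z, of i] by (simp add: walk_coords_def coords_step_def)
  next
    case 3
    then show ?thesis using z_box by (auto simp: walk_coords_def pattern_coords_def pattern_reps_def
        PiE_iff extensional_def)
  qed
qed

lemma card_pairing_walks_eq_card_points: "card (pairing_walks n \<sigma> N) = card (points N)"
proof (rule bij_betw_same_card[of "walk_coords n (pairing_pattern \<sigma>)"], rule bij_betw_imageI)
  show "inj_on (walk_coords n (pairing_pattern \<sigma>)) (pairing_walks n \<sigma> N)"
    unfolding pairing_walks_eq_pattern_walks[OF pairing]
    by (rule inj_on_walk_coords[OF step_pattern_pairing_pattern[OF pairing]])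
  show "walk_coords n (pairing_pattern \<sigma>) ` pairing_walks n \<sigma> N = points N"
  proof (intro equalityI image_subsetI subsetI)
    fix z assume "z \<in> points N"
    then show "z \<in> walk_coords n (pairing_pattern \<sigma>) ` pairing_walks n \<sigma> N"
      using walk_of_coords_in_pairing_walks walk_coords_walk_of_coords by (metis image_eqI)
  qed (rule walk_coords_in_points)
qed

lemma convergent_pairing_walks_density:
  "convergent (\<lambda>N. real (card (pairing_walks n \<sigma> N)) / real N ^ Suc (card (pairing_openers n \<sigma>)))"
  using convergent_lattice_density
  unfolding lattice_density_def card_pairing_walks_eq_card_points card_pattern_coords
    pattern_reps_pairing_pattern[OF pairing] .

end

definition pairing_volume :: "nat \<Rightarrow> (nat \<Rightarrow> nat) \<Rightarrow> real" where
  "pairing_volume k \<sigma> = lim (\<lambda>N. real (card (pairing_walks (2 * k) \<sigma> N)) / real N ^ Suc k)"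

lemma pairing_density_tendsto_volume:
  assumes "\<sigma> \<in> pairings (2 * k)" "k \<ge> 1"
  shows "(\<lambda>N. real (card (pairing_walks (2 * k) \<sigma> N)) / real N ^ Suc k) \<longlonglongrightarrow> pairing_volume k \<sigma>"
proof -
  interpret pairing_lattice "2 * k" \<sigma> using assms by unfold_locales auto
  show ?thesis
    using convergent_pairing_walks_density card_pairing_openers[OF assms(1)]
    by (simp add: pairing_volume_def convergent_LIMSEQ_iff)
qed


text \<open>A walk respecting \<open>\<sigma>\<close> is determined by its start and its vertices right after opening steps:
  every closing step is the negative of an earlier step.\<close>
definition pairing_free_times :: "nat \<Rightarrow> (nat \<Rightarrow> nat) \<Rightarrow> nat set" where
  "pairing_free_times n \<sigma> = insert 0 (Suc ` pairing_openers n \<sigma>)"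

lemma finite_pairing_free_times: "finite (pairing_free_times n \<sigma>)"
  by (simp add: pairing_free_times_def pairing_openers_def)

lemma pairing_free_times_subset:
  assumes "\<sigma> \<in> pairings n" "n \<ge> 1"
  shows "pairing_free_times n \<sigma> \<subseteq> {..<n}"
proof -
  have "Suc a < n" if "a < n" "a < \<sigma> a" for a using pairings_onD(1)[OF assms(1), of a] that by simp
  then show ?thesis using assms(2) by (auto simp: pairing_free_times_def pairing_openers_def)
qed

lemma card_pairing_free_times:
  assumes "\<sigma> \<in> pairings (2 * k)"
  shows "card (pairing_free_times (2 * k) \<sigma>) = Suc k"
proof -
  have "card (Suc ` pairing_openers (2 * k) \<sigma>) = k"
    using card_pairing_openers[OF assms] by (simp add: card_image)
  moreover have "finite (pairing_openers (2 * k) \<sigma>)" by (simp add: pairing_openers_def)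
  ultimately show ?thesis by (auto simp: pairing_free_times_def)
qed

lemma pairing_walks_eq_on_free_times:
  assumes \<sigma>: "\<sigma> \<in> pairings n" and g: "g \<in> pairing_walks n \<sigma> N" and g': "g' \<in> pairing_walks n \<sigma> N"
    and agree: "\<And>j. j \<in> pairing_free_times n \<sigma> \<Longrightarrow> g j = g' j"
  shows "t < n \<Longrightarrow> g t = g' t"
proof (induction t rule: less_induct)
  case (less t)
  show ?case
  proof (cases t)
    case 0
    then show ?thesis using agree by (simp add: pairing_free_times_def)
  next
    case (Suc u)
    have u: "u < n" "Suc u < n" using less.prems Suc by auto
    show ?thesis
    proof (cases "u < \<sigma> u")
      case True
      then show ?thesis using agree Suc u by (simp add: pairing_free_times_def pairing_openers_def)
    next
      case False
      have "\<sigma> u \<noteq> u" "\<sigma> u < n" "\<sigma> (\<sigma> u) = u" using pairings_onD[OF \<sigma>, of u] u by auto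
      then have \<sigma>u: "\<sigma> u < u" "\<sigma> u < n" "\<sigma> (\<sigma> u) = u" using False by auto
      have closing: "step n f u = - step n f (\<sigma> u)" if "f \<in> pairing_walks n \<sigma> N" for f
        using that \<sigma>u by (auto simp: pairing_walks_def)
      have "g (\<sigma> u) = g' (\<sigma> u)" "g (Suc (\<sigma> u)) = g' (Suc (\<sigma> u))" "g u = g' u"
        using less.IH \<sigma>u Suc u by auto
      moreover have "Suc (\<sigma> u) mod n = Suc (\<sigma> u)" using \<sigma>u u by simp
      ultimately have "step n g u = step n g' u"
        using closing[OF g] closing[OF g'] by (simp add: step_def)
      then show ?thesis using \<open>g u = g' u\<close> Suc u by (simp add: step_def)
    qed
  qed
qed

lemma inj_on_restrict_pairing_free_times:
  assumes "\<sigma> \<in> pairings n"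
  shows "inj_on (\<lambda>g. restrict g (pairing_free_times n \<sigma>)) (pairing_walks n \<sigma> N)"
proof (rule inj_onI)
  fix g g' assume g: "g \<in> pairing_walks n \<sigma> N" and g': "g' \<in> pairing_walks n \<sigma> N"
    and "restrict g (pairing_free_times n \<sigma>) = restrict g' (pairing_free_times n \<sigma>)"
  then have "\<And>j. j \<in> pairing_free_times n \<sigma> \<Longrightarrow> g j = g' j" by (metis restrict_apply')
  then have "\<And>t. t \<in> {..<n} \<Longrightarrow> g t = g' t" using pairing_walks_eq_on_free_times[OF assms g g'] by blast
  moreover have "g \<in> walks n N" "g' \<in> walks n N" using g g' by (auto simp: pairing_walks_def)
  ultimately show "g = g'" unfolding walks_def by (metis PiE_ext)
qed

lemma card_pairing_walks_le:
  assumes \<sigma>: "\<sigma> \<in> pairings (2 * k)" and k: "k \<ge> 1"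
  shows "card (pairing_walks (2 * k) \<sigma> N) \<le> N ^ Suc k"
proof -
  let ?J = "pairing_free_times (2 * k) \<sigma>"
  have "card (pairing_walks (2 * k) \<sigma> N) = card ((\<lambda>g. restrict g ?J) ` pairing_walks (2 * k) \<sigma> N)"
    using card_image[OF inj_on_restrict_pairing_free_times[OF \<sigma>]] by simp
  also have "\<dots> \<le> card (PiE ?J (\<lambda>_. {..<N}))"
    using pairing_free_times_subset[OF \<sigma>] k
    by (intro card_mono) (force simp: pairing_walks_def walks_def PiE_iff
        intro: finite_PiE finite_pairing_free_times)+
  also have "\<dots> = N ^ Suc k"
    by (simp add: card_PiE finite_pairing_free_times card_pairing_free_times[OF \<sigma>])
  finally show ?thesis .
qed

lemma pairing_volume_le_1:
  assumes \<sigma>: "\<sigma> \<in> pairings (2 * k)" and k: "k \<ge> 1"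
  shows "pairing_volume k \<sigma> \<le> 1"
proof (rule LIMSEQ_le_const2[OF pairing_density_tendsto_volume[OF assms]])
  have "real (card (pairing_walks (2 * k) \<sigma> N)) / real N ^ Suc k \<le> 1" if "N \<ge> 1" for N
  proof -
    have "real (card (pairing_walks (2 * k) \<sigma> N)) \<le> real (N ^ Suc k)"
      using card_pairing_walks_le[OF assms] by (simp only: of_nat_le_iff)
    with that show ?thesis by (simp add: divide_le_eq_1)
  qed
  then show "\<exists>N0. \<forall>N\<ge>N0. real (card (pairing_walks (2 * k) \<sigma> N)) / real N ^ Suc k \<le> 1" by blast
qed

text \<open>The pairing \<open>{0,2}, {1,3}, {4,5}, {6,7}, ...\<close>. Its two crossing pairs force
  \<open>g 3 = g 0 - g 1 + g 2\<close>, which fails for a positive proportion of free choices.\<close>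
definition crossing_pairing :: "nat \<Rightarrow> nat \<Rightarrow> nat" where
  "crossing_pairing n t = (if t = 0 then 2 else if t = 1 then 3 else if t = 2 then 0 else if t = 3 then 1
     else if t < n then (if even t then Suc t else t - 1) else t)"

lemma crossing_pairing_in_pairings:
  assumes k: "k \<ge> 2"
  shows "crossing_pairing (2 * k) \<in> pairings (2 * k)"
proof -
  have "crossing_pairing (2 * k) t < 2 * k \<and> crossing_pairing (2 * k) t \<noteq> t
      \<and> crossing_pairing (2 * k) (crossing_pairing (2 * k) t) = t" if t: "t < 2 * k" for t
  proof -
    consider "t < 4" | "t \<ge> 4" "even t" | "t \<ge> 4" "odd t" by linarith
    then show ?thesis
    proof cases
      case 1
      then show ?thesis using k by (auto simp: crossing_pairing_def)
    next
      case 2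
      then have "Suc t < 2 * k" using t by presburger
      then show ?thesis using 2 by (simp add: crossing_pairing_def)
    next
      case 3
      then have "t - 1 \<ge> 4" "even (t - 1)" by presburger+
      then show ?thesis using 3 t by (simp add: crossing_pairing_def) linarith
    qed
  qed
  then show ?thesis using k by (auto simp: pairings_on_def crossing_pairing_def)
qed

lemma crossing_pairing_walk_vertex_3:
  assumes k: "k \<ge> 2" and g: "g \<in> pairing_walks (2 * k) (crossing_pairing (2 * k)) N"
  shows "int (g 3) = int (g 0) - int (g 1) + int (g 2)"
proof -
  have "step (2 * k) g (crossing_pairing (2 * k) 0) = - step (2 * k) g 0"
    using g k by (auto simp: pairing_walks_def)
  moreover have "Suc 2 mod (2 * k) = 3" "Suc 0 mod (2 * k) = 1" using k by auto
  ultimately show ?thesis by (simp add: step_def crossing_pairing_def)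
qed


definition crossing_corner :: "nat \<Rightarrow> nat \<Rightarrow> nat set" where
  "crossing_corner N j =
    (if j = 0 \<or> j = 2 then {N - N div 3..<N} else if j = 1 then {..<N div 3} else {..<N})"

lemma zero_one_two_in_crossing_free_times:
  assumes "k \<ge> 2"
  shows "{0, 1, 2} \<subseteq> pairing_free_times (2 * k) (crossing_pairing (2 * k))"
  using assms by (auto simp: pairing_free_times_def pairing_openers_def crossing_pairing_def image_iff)

lemma card_PiE_crossing_corner:
  assumes k: "k \<ge> 2"
  shows "card (PiE (pairing_free_times (2 * k) (crossing_pairing (2 * k))) (crossing_corner N))
    = (N div 3) ^ 3 * N ^ (k - 2)"
proof -
  let ?J = "pairing_free_times (2 * k) (crossing_pairing (2 * k))" and ?q = "N div 3"
  have J: "{0, 1, 2} \<subseteq> ?J" by (rule zero_one_two_in_crossing_free_times[OF k])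
  have "card (PiE ?J (crossing_corner N)) = (\<Prod>j\<in>?J. if j \<in> {0, 1, 2} then ?q else N)"
    unfolding card_PiE[OF finite_pairing_free_times] by (rule prod.cong) (auto simp: crossing_corner_def)
  also have "\<dots> = (\<Prod>j\<in>?J \<inter> {j. j \<in> {0, 1, 2}}. ?q) * (\<Prod>j\<in>?J \<inter> - {j. j \<in> {0, 1, 2}}. N)"
    by (rule prod.If_cases[OF finite_pairing_free_times])
  also have "?J \<inter> {j. j \<in> {0, 1, 2}} = {0, 1, 2}" using J by auto
  also have "?J \<inter> - {j. j \<in> {0, 1, 2}} = ?J - {0, 1, 2}" by auto
  also have "(\<Prod>j\<in>{0::nat, 1, 2}. ?q) * (\<Prod>j\<in>?J - {0, 1, 2}. N) = ?q ^ 3 * N ^ (k - 2)"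
    using J card_pairing_free_times[OF crossing_pairing_in_pairings[OF k]]
    by (simp add: card_Diff_subset power3_eq_cube numeral_2_eq_2)
  finally show ?thesis .
qed

lemma restrict_crossing_pairing_walk_notin_corner:
  assumes k: "k \<ge> 2" and g: "g \<in> pairing_walks (2 * k) (crossing_pairing (2 * k)) N"
  shows "restrict g (pairing_free_times (2 * k) (crossing_pairing (2 * k))) \<notin>
    PiE (pairing_free_times (2 * k) (crossing_pairing (2 * k))) (crossing_corner N)"
proof
  assume "restrict g (pairing_free_times (2 * k) (crossing_pairing (2 * k)))
    \<in> PiE (pairing_free_times (2 * k) (crossing_pairing (2 * k))) (crossing_corner N)"
  then have "g 0 \<ge> N - N div 3" "g 2 \<ge> N - N div 3" "g 1 < N div 3"
    using zero_one_two_in_crossing_free_times[OF k] by (auto simp: PiE_iff crossing_corner_def)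
  moreover have "g 3 < N" using g k by (auto simp: pairing_walks_def walks_def PiE_iff)
  ultimately show False using crossing_pairing_walk_vertex_3[OF k g] by linarith
qed

lemma card_crossing_pairing_walks_le:
  assumes k: "k \<ge> 2"
  shows "card (pairing_walks (2 * k) (crossing_pairing (2 * k)) N) \<le> N ^ Suc k - (N div 3) ^ 3 * N ^ (k - 2)"
proof -
  let ?\<sigma> = "crossing_pairing (2 * k)"
  let ?J = "pairing_free_times (2 * k) ?\<sigma>" and ?W = "pairing_walks (2 * k) ?\<sigma> N"
  have \<sigma>: "?\<sigma> \<in> pairings (2 * k)" by (rule crossing_pairing_in_pairings[OF k])
  have "(\<lambda>g. restrict g ?J) ` ?W \<subseteq> PiE ?J (\<lambda>_. {..<N}) - PiE ?J (crossing_corner N)"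
    using pairing_free_times_subset[OF \<sigma>] k restrict_crossing_pairing_walk_notin_corner[OF k]
    by (force simp: pairing_walks_def walks_def PiE_iff)
  then have "card ((\<lambda>g. restrict g ?J) ` ?W) \<le> card (PiE ?J (\<lambda>_. {..<N}) - PiE ?J (crossing_corner N))"
    by (rule card_mono[rotated]) (auto intro!: finite_PiE finite_pairing_free_times)
  then have "card ?W \<le> card (PiE ?J (\<lambda>_. {..<N}) - PiE ?J (crossing_corner N))"
    by (simp add: card_image[OF inj_on_restrict_pairing_free_times[OF \<sigma>]])
  also have "\<dots> = card (PiE ?J (\<lambda>_. {..<N})) - card (PiE ?J (crossing_corner N))"
    using div_le_dividend[of N 3]
    by (intro card_Diff_subset PiE_mono) (auto intro!: finite_PiE finite_pairing_free_times
        simp: crossing_corner_def split: if_splits)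
  also have "\<dots> = N ^ Suc k - (N div 3) ^ 3 * N ^ (k - 2)"
    using card_PiE_crossing_corner[OF k] card_pairing_free_times[OF \<sigma>]
    by (simp add: card_PiE finite_pairing_free_times)
  finally show ?thesis .
qed

lemma card_crossing_pairing_walks_le_fraction:
  assumes k: "k \<ge> 2" and N: "N \<ge> 4"
  shows "real (card (pairing_walks (2 * k) (crossing_pairing (2 * k)) N)) \<le> (1 - 1/216) * real N ^ Suc k"
proof -
  define q where "q = N div 3"
  have q: "q \<le> N" "real N / 6 \<le> real q" using N by (simp_all add: q_def)
  have "q ^ 3 * N ^ (k - 2) \<le> N ^ 3 * N ^ (k - 2)" using q by (simp add: power_mono)
  also have "\<dots> = N ^ Suc k" using k by (simp flip: power_add)
  finally have "real (N ^ Suc k - q ^ 3 * N ^ (k - 2)) = real N ^ Suc k - real q ^ 3 * real N ^ (k - 2)"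
    by (simp add: of_nat_diff)
  then have "real (card (pairing_walks (2 * k) (crossing_pairing (2 * k)) N))
      \<le> real N ^ Suc k - real q ^ 3 * real N ^ (k - 2)"
    using card_crossing_pairing_walks_le[OF k, of N] unfolding q_def by (metis of_nat_le_iff)
  moreover have "(real N / 6) ^ 3 * real N ^ (k - 2) \<le> real q ^ 3 * real N ^ (k - 2)"
    using q by (intro mult_right_mono power_mono) auto
  moreover have "(real N / 6) ^ 3 * real N ^ (k - 2) = (1/216) * real N ^ Suc k"
    using k by (simp add: power_divide field_simps flip: power_add)
  ultimately show ?thesis by (simp add: algebra_simps)
qed

lemma pairing_volume_crossing_pairing_le:
  assumes k: "k \<ge> 2"
  shows "pairing_volume k (crossing_pairing (2 * k)) \<le> 1 - 1/216"
proof (rule LIMSEQ_le_const2[OF pairing_density_tendsto_volume[OF crossing_pairing_in_pairings[OF k]]])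
  have "real (card (pairing_walks (2 * k) (crossing_pairing (2 * k)) N)) / real N ^ Suc k \<le> 1 - 1/216"
    if "N \<ge> 4" for N
    using card_crossing_pairing_walks_le_fraction[OF k that] that by (simp add: divide_le_eq)
  then show "\<exists>N0. \<forall>N\<ge>N0. real (card (pairing_walks (2 * k) (crossing_pairing (2 * k)) N)) / real N ^ Suc k
      \<le> 1 - 1/216" by blast
qed (use k in simp)

text \<open>Every pairing contributes at most \<open>1\<close>, there are at most \<open>(2k-1)!!\<close> pairings, and the
  crossing pairing contributes strictly less.\<close>
lemma sum_pairing_volume_less:
  assumes k: "k \<ge> 2"
  shows "(\<Sum>\<sigma>\<in>pairings (2 * k). pairing_volume k \<sigma>) < real (odd_double_fact k)"
proof -
  let ?\<sigma>0 = "crossing_pairing (2 * k)"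
  have \<sigma>0: "?\<sigma>0 \<in> pairings (2 * k)" by (rule crossing_pairing_in_pairings[OF k])
  have fin: "finite (pairings (2 * k))" by (simp add: finite_pairings_on)
  have "(\<Sum>\<sigma>\<in>pairings (2 * k). pairing_volume k \<sigma>)
      = pairing_volume k ?\<sigma>0 + (\<Sum>\<sigma>\<in>pairings (2 * k) - {?\<sigma>0}. pairing_volume k \<sigma>)"
    by (rule sum.remove[OF fin \<sigma>0])
  also have "\<dots> \<le> (1 - 1/216) + (\<Sum>\<sigma>\<in>pairings (2 * k) - {?\<sigma>0}. 1)"
    using pairing_volume_crossing_pairing_le[OF k] pairing_volume_le_1 k
    by (intro add_mono sum_mono) auto
  also have "\<dots> = real (card (pairings (2 * k))) - 1/216"
    using \<sigma>0 fin by (simp add: card_Diff_singleton of_nat_diff card_gt_0_iff[symmetric]) (cases "card (pairings (2 * k))"; auto)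
  also have "\<dots> < real (odd_double_fact k)"
    using of_nat_mono[OF card_pairings_le[of k]] by simp
  finally show ?thesis .
qed

section \<open>Degenerate walks\<close>

definition lengths_repeated :: "nat \<Rightarrow> (nat \<Rightarrow> nat) \<Rightarrow> bool" where
  "lengths_repeated n f \<longleftrightarrow> (\<forall>t<n. length_multiplicity n f (step_length n f t) \<ge> 2)"

definition paired_walk :: "nat \<Rightarrow> (nat \<Rightarrow> nat) \<Rightarrow> bool" where
  "paired_walk n f \<longleftrightarrow> (\<forall>t<n. step n f t \<noteq> 0 \<and> length_multiplicity n f (step_length n f t) = 2 \<and>
      (\<forall>s<n. s \<noteq> t \<and> step_length n f s = step_length n f t \<longrightarrow> step n f s = - step n f t))"

definition degenerate_walks :: "nat \<Rightarrow> nat \<Rightarrow> (nat \<Rightarrow> nat) set" where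
  "degenerate_walks n N = {f \<in> walks n N. lengths_repeated n f \<and> \<not> paired_walk n f}"

definition length_pattern :: "nat \<Rightarrow> (nat \<Rightarrow> nat) \<Rightarrow> nat \<Rightarrow> nat" where
  "length_pattern n f t = (if t < n then (LEAST s. step_length n f s = step_length n f t) else undefined)"

definition length_signs :: "nat \<Rightarrow> (nat \<Rightarrow> nat) \<Rightarrow> nat \<Rightarrow> int" where
  "length_signs n f t =
    (if t < n then (if step n f t = step n f (length_pattern n f t) then 1 else -1) else undefined)"

lemma length_pattern_le: "t < n \<Longrightarrow> length_pattern n f t \<le> t"
  by (simp add: length_pattern_def Least_le)

lemma length_pattern_less: "t < n \<Longrightarrow> length_pattern n f t < n"
  using length_pattern_le le_less_trans by blast

lemma step_length_length_pattern: "t < n \<Longrightarrow> step_length n f (length_pattern n f t) = step_length n f t"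
  by (simp add: length_pattern_def) (rule LeastI[of _ t], simp)

lemma length_pattern_idem: "t < n \<Longrightarrow> length_pattern n f (length_pattern n f t) = length_pattern n f t"
  using step_length_length_pattern[of t n f] length_pattern_less[of t n f] by (simp add: length_pattern_def)

lemma length_pattern_eq_iff:
  "s < n \<Longrightarrow> t < n \<Longrightarrow> length_pattern n f s = length_pattern n f t \<longleftrightarrow> step_length n f s = step_length n f t"
  by (metis length_pattern_def step_length_length_pattern)

lemma step_pattern_length_pattern: "step_pattern n (length_pattern n f)"
  by (simp add: step_pattern_def length_pattern_less length_pattern_idem)

lemma walk_in_length_pattern_walks:
  assumes "f \<in> walks n N"
  shows "f \<in> pattern_walks n (length_pattern n f) (length_signs n f) N"
proof -
  have "step n f t = length_signs n f t * step n f (length_pattern n f t)" if t: "t < n" for t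
  proof -
    have "\<bar>step n f (length_pattern n f t)\<bar> = \<bar>step n f t\<bar>"
      using step_length_length_pattern[OF t] by (simp add: step_length_eq_iff)
    then show ?thesis using t by (auto simp: length_signs_def abs_eq_iff)
  qed
  then show ?thesis using assms by (simp add: pattern_walks_def)
qed

lemma length_multiplicity_eq_card_class:
  "t < n \<Longrightarrow> length_multiplicity n f (step_length n f t)
    = card {u\<in>{..<n}. length_pattern n f u = length_pattern n f t}"
  unfolding length_multiplicity_def by (rule arg_cong[where f=card]) (auto simp: length_pattern_eq_iff)

lemma sum_card_pattern_classes:
  assumes "step_pattern n \<mu>"
  shows "(\<Sum>a\<in>pattern_reps n \<mu>. card {t\<in>{..<n}. \<mu> t = a}) = n"
proof -
  have "(\<Sum>a\<in>pattern_reps n \<mu>. card {t\<in>{..<n}. \<mu> t = a})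
      = (\<Sum>a\<in>pattern_reps n \<mu>. \<Sum>t\<in>{t\<in>{..<n}. \<mu> t = a}. (1::nat))"
    by simp
  also have "\<dots> = (\<Sum>t\<in>{..<n}. (1::nat))"
    by (rule sum.group) (use assms in \<open>auto simp: pattern_reps_def step_pattern_def\<close>)
  finally show ?thesis by simp
qed

definition coords_closure :: "nat \<Rightarrow> (nat \<Rightarrow> nat) \<Rightarrow> (nat \<Rightarrow> int) \<Rightarrow> (nat \<Rightarrow> int) \<Rightarrow> int" where
  "coords_closure n \<mu> \<epsilon> z = (\<Sum>u<n. coords_step \<mu> \<epsilon> u z)"

lemma coords_closure_walk_coords:
  assumes "step_pattern n \<mu>" "g \<in> pattern_walks n \<mu> \<epsilon> N" "n \<ge> 1"
  shows "coords_closure n \<mu> \<epsilon> (walk_coords n \<mu> g) = 0"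
  using coords_step_walk_coords[OF assms(1,2)] sum_steps_eq_0[OF assms(3)]
  by (simp add: coords_closure_def)

text \<open>If a class \<open>{a, b}\<close> has two steps of the same sign, the coordinate at \<open>a\<close> enters the
  closure relation with coefficient \<open>2\<close>.\<close>
lemma coords_closure_determines:
  assumes \<mu>: "step_pattern n \<mu>" and a: "a \<in> pattern_reps n \<mu>"
    and b: "b < n" "b \<noteq> a" "\<mu> b = a" "\<epsilon> b = 1"
    and pair_class: "{t\<in>{..<n}. \<mu> t = a} = {a, b}"
    and agree: "\<forall>j\<in>pattern_coords n \<mu> - {a}. z j = z' j"
    and eq: "coords_closure n \<mu> \<epsilon> z = coords_closure n \<mu> \<epsilon> z'"
  shows "z a = z' a"
proof -
  have a': "a < n" "\<mu> a = a" using a by (auto simp: pattern_reps_def)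
  have diff: "coords_step \<mu> \<epsilon> u z - coords_step \<mu> \<epsilon> u z' = (if u \<in> {a, b} then z a - z' a else 0)"
    if u: "u < n" for u
  proof (cases "u \<in> {a, b}")
    case True
    then show ?thesis using a' b by (auto simp: coords_step_def)
  next
    case False
    have "\<mu> u < n" "\<mu> (\<mu> u) = \<mu> u" using \<mu> u by (auto simp: step_pattern_def)
    moreover have "\<mu> u \<noteq> a" using pair_class u False by auto
    ultimately show ?thesis
      using agree False u by (auto simp: coords_step_def pattern_coords_def pattern_reps_def)
  qed
  have "0 = coords_closure n \<mu> \<epsilon> z - coords_closure n \<mu> \<epsilon> z'" using eq by simp
  also have "\<dots> = (\<Sum>u<n. if u \<in> {a, b} then z a - z' a else 0)"
    unfolding coords_closure_def sum_subtractf[symmetric] by (rule sum.cong) (simp_all add: diff)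
  also have "\<dots> = (\<Sum>u\<in>{..<n} \<inter> {a, b}. z a - z' a)" by (rule sum.inter_restrict[symmetric]) simp
  also have "{..<n} \<inter> {a, b} = {a, b}" using a' b by auto
  also have "(\<Sum>u\<in>{a, b}. z a - z' a) = 2 * (z a - z' a)" using b by simp
  finally show ?thesis by simp
qed

lemma card_pattern_walks_zero_step_le:
  assumes "step_pattern n \<mu>" "n \<ge> 1" "a \<in> pattern_reps n \<mu>"
  shows "card {g \<in> pattern_walks n \<mu> \<epsilon> N. step n g a = 0} \<le> (2 * N + 1) ^ card (pattern_reps n \<mu>)"
  using assms
  by (intro card_pattern_walks_level_set_le[where G="\<lambda>z. z a" and i=a])
     (auto simp: pattern_coords_def walk_coords_def pattern_reps_def)

lemma card_pattern_walks_same_sign_le: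
  assumes "step_pattern n \<mu>" "n \<ge> 1" "a \<in> pattern_reps n \<mu>"
    and "b < n" "b \<noteq> a" "\<mu> b = a" "\<epsilon> b = 1" "{t\<in>{..<n}. \<mu> t = a} = {a, b}"
  shows "card (pattern_walks n \<mu> \<epsilon> N) \<le> (2 * N + 1) ^ card (pattern_reps n \<mu>)"
  using assms coords_closure_determines[OF assms(1,3)] coords_closure_walk_coords[OF assms(1) _ assms(2)]
  by (intro card_pattern_walks_level_set_le[where G="coords_closure n \<mu> \<epsilon>" and i=a])
     (auto simp: pattern_coords_def)


text \<open>A pattern is degenerate if its walks have at most \<open>k\<close> free coordinates, or \<open>k + 1\<close>
  coordinates subject to the nontrivial relation of \<open>coords_closure_determines\<close>.\<close>
definition degenerate_pattern :: "nat \<Rightarrow> (nat \<Rightarrow> nat) \<Rightarrow> (nat \<Rightarrow> int) \<Rightarrow> bool" where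
  "degenerate_pattern k \<mu> \<epsilon> \<longleftrightarrow> card (pattern_reps (2 * k) \<mu>) < k \<or> card (pattern_reps (2 * k) \<mu>) \<le> k \<and>
    (\<exists>a\<in>pattern_reps (2 * k) \<mu>. \<exists>b<2 * k. b \<noteq> a \<and> \<mu> b = a \<and> \<epsilon> b = 1 \<and> {t\<in>{..<2 * k}. \<mu> t = a} = {a, b})"

definition zero_step_pattern_walks :: "nat \<Rightarrow> (nat \<Rightarrow> nat) \<Rightarrow> (nat \<Rightarrow> int) \<Rightarrow> nat \<Rightarrow> (nat \<Rightarrow> nat) set" where
  "zero_step_pattern_walks n \<mu> \<epsilon> N = (\<Union>a\<in>pattern_reps n \<mu>. {g \<in> pattern_walks n \<mu> \<epsilon> N. step n g a = 0})"

definition degenerate_pattern_walks :: "nat \<Rightarrow> (nat \<Rightarrow> nat) \<Rightarrow> (nat \<Rightarrow> int) \<Rightarrow> nat \<Rightarrow> (nat \<Rightarrow> nat) set" where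
  "degenerate_pattern_walks k \<mu> \<epsilon> N =
    (if degenerate_pattern k \<mu> \<epsilon> then pattern_walks (2 * k) \<mu> \<epsilon> N else {}) \<union>
    (if card (pattern_reps (2 * k) \<mu>) \<le> k then zero_step_pattern_walks (2 * k) \<mu> \<epsilon> N else {})"

lemma card_pattern_walks_degenerate_pattern_le:
  assumes \<mu>: "step_pattern (2 * k) \<mu>" and k: "k \<ge> 1" and degenerate: "degenerate_pattern k \<mu> \<epsilon>"
  shows "card (pattern_walks (2 * k) \<mu> \<epsilon> N) \<le> (2 * N + 1) ^ k"
proof -
  let ?R = "pattern_reps (2 * k) \<mu>"
  have n: "2 * k \<ge> 1" using k by simp
  consider "card ?R < k" | a b where "card ?R \<le> k" "a \<in> ?R" "b < 2 * k" "b \<noteq> a" "\<mu> b = a"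
    "\<epsilon> b = 1" "{t\<in>{..<2 * k}. \<mu> t = a} = {a, b}"
    using degenerate unfolding degenerate_pattern_def by blast
  then show ?thesis
  proof cases
    case 1
    have "card (pattern_walks (2 * k) \<mu> \<epsilon> N) \<le> (2 * N + 1) ^ Suc (card ?R)"
      by (rule card_pattern_walks_le[OF \<mu> n])
    also have "\<dots> \<le> (2 * N + 1) ^ k" using 1 by (intro power_increasing) auto
    finally show ?thesis .
  next
    case 2
    then have "card (pattern_walks (2 * k) \<mu> \<epsilon> N) \<le> (2 * N + 1) ^ card ?R"
      by (intro card_pattern_walks_same_sign_le[OF \<mu> n])
    also have "\<dots> \<le> (2 * N + 1) ^ k" using 2 by (intro power_increasing) auto
    finally show ?thesis .
  qed
qed

lemma card_zero_step_pattern_walks_le: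
  assumes \<mu>: "step_pattern n \<mu>" and n: "n \<ge> 1" and card_R: "card (pattern_reps n \<mu>) \<le> k"
  shows "card (zero_step_pattern_walks n \<mu> \<epsilon> N) \<le> n * (2 * N + 1) ^ k"
proof -
  let ?R = "pattern_reps n \<mu>"
  have power: "(2 * N + 1) ^ card ?R \<le> (2 * N + 1) ^ k" using card_R by (intro power_increasing) auto
  have "card (zero_step_pattern_walks n \<mu> \<epsilon> N)
      \<le> (\<Sum>a\<in>?R. card {g \<in> pattern_walks n \<mu> \<epsilon> N. step n g a = 0})"
    unfolding zero_step_pattern_walks_def by (rule card_UN_le[OF finite_pattern_reps])
  also have "\<dots> \<le> (\<Sum>a\<in>?R. (2 * N + 1) ^ k)"
    by (intro sum_mono order.trans[OF card_pattern_walks_zero_step_le[OF \<mu> n] power])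
  also have "\<dots> \<le> n * (2 * N + 1) ^ k"
    using card_mono[of "{..<n}" ?R] by (auto simp: pattern_reps_def)
  finally show ?thesis .
qed

lemma card_degenerate_pattern_walks_le:
  assumes \<mu>: "step_pattern (2 * k) \<mu>" and k: "k \<ge> 1"
  shows "card (degenerate_pattern_walks k \<mu> \<epsilon> N) \<le> (2 * k + 1) * (2 * N + 1) ^ k"
proof -
  have "card (if degenerate_pattern k \<mu> \<epsilon> then pattern_walks (2 * k) \<mu> \<epsilon> N else {}) \<le> (2 * N + 1) ^ k"
    using card_pattern_walks_degenerate_pattern_le[OF \<mu> k] by simp
  moreover have "card (if card (pattern_reps (2 * k) \<mu>) \<le> k then zero_step_pattern_walks (2 * k) \<mu> \<epsilon> N
      else {}) \<le> 2 * k * (2 * N + 1) ^ k"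
    using card_zero_step_pattern_walks_le[OF \<mu>] k by simp
  ultimately have "card (degenerate_pattern_walks k \<mu> \<epsilon> N) \<le> (2 * N + 1) ^ k + 2 * k * (2 * N + 1) ^ k"
    unfolding degenerate_pattern_walks_def by (rule order.trans[OF card_Un_le add_mono])
  then show ?thesis by (simp add: algebra_simps)
qed

lemma card_length_class_ge_2:
  assumes "lengths_repeated n f" "a \<in> pattern_reps n (length_pattern n f)"
  shows "card {t\<in>{..<n}. length_pattern n f t = a} \<ge> 2"
  using assms length_multiplicity_eq_card_class[of a n f]
  by (auto simp: lengths_repeated_def pattern_reps_def)

lemma card_reps_length_pattern_le:
  assumes "lengths_repeated (2 * k) f"
  shows "card (pattern_reps (2 * k) (length_pattern (2 * k) f)) \<le> k"
proof -
  let ?R = "pattern_reps (2 * k) (length_pattern (2 * k) f)"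
  have "2 * card ?R = (\<Sum>a\<in>?R. 2)" by simp
  also have "\<dots> \<le> (\<Sum>a\<in>?R. card {t\<in>{..<2 * k}. length_pattern (2 * k) f t = a})"
    by (rule sum_mono) (rule card_length_class_ge_2[OF assms])
  also have "\<dots> = 2 * k" by (rule sum_card_pattern_classes[OF step_pattern_length_pattern])
  finally show ?thesis by simp
qed

lemma card_length_class_eq_2:
  assumes rep: "lengths_repeated (2 * k) f"
    and card_R: "card (pattern_reps (2 * k) (length_pattern (2 * k) f)) = k"
    and a: "a \<in> pattern_reps (2 * k) (length_pattern (2 * k) f)"
  shows "card {t\<in>{..<2 * k}. length_pattern (2 * k) f t = a} = 2"
proof (rule ccontr)
  let ?R = "pattern_reps (2 * k) (length_pattern (2 * k) f)"
  let ?c = "\<lambda>a. card {t\<in>{..<2 * k}. length_pattern (2 * k) f t = a}"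
  assume "?c a \<noteq> 2"
  then have "?c a \<ge> 3" using card_length_class_ge_2[OF rep a] by simp
  moreover have "(\<Sum>b\<in>?R - {a}. 2) \<le> (\<Sum>b\<in>?R - {a}. ?c b)"
    by (rule sum_mono) (use card_length_class_ge_2[OF rep] in auto)
  moreover have "(\<Sum>b\<in>?R. ?c b) = ?c a + (\<Sum>b\<in>?R - {a}. ?c b)"
    by (rule sum.remove[OF finite_pattern_reps a])
  moreover have "(\<Sum>b\<in>?R - {a}. (2::nat)) = 2 * (k - 1)" using card_R a finite_pattern_reps by simp
  moreover have "(\<Sum>b\<in>?R. ?c b) = 2 * k" by (rule sum_card_pattern_classes[OF step_pattern_length_pattern])
  ultimately show False using card_R a by (cases k) auto
qed

lemma zero_step_walk_in_zero_step_pattern_walks: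
  assumes "f \<in> walks n N" "t < n" "step n f t = 0"
  shows "f \<in> zero_step_pattern_walks n (length_pattern n f) (length_signs n f) N"
proof -
  have "length_pattern n f t \<in> pattern_reps n (length_pattern n f)"
    using assms(2) length_pattern_idem length_pattern_less by (simp add: pattern_reps_def)
  moreover have "step n f (length_pattern n f t) = 0"
    using assms(3) step_length_length_pattern[OF assms(2)] by (simp add: step_length_eq_0_iff[symmetric])
  ultimately show ?thesis
    using walk_in_length_pattern_walks[OF assms(1)] by (auto simp: zero_step_pattern_walks_def)
qed

lemma degenerate_pattern_if_same_sign:
  assumes rep: "lengths_repeated (2 * k) f"
    and card_R: "card (pattern_reps (2 * k) (length_pattern (2 * k) f)) = k"
    and s: "s < 2 * k" and t: "t < 2 * k" and "s \<noteq> t" and same_sign: "step (2 * k) f s = step (2 * k) f t"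
  shows "degenerate_pattern k (length_pattern (2 * k) f) (length_signs (2 * k) f)"
proof -
  let ?n = "2 * k" and ?\<mu> = "length_pattern (2 * k) f" and ?\<epsilon> = "length_signs (2 * k) f"
  define a where "a = ?\<mu> t"
  have a: "a \<in> pattern_reps ?n ?\<mu>" "a < ?n" "?\<mu> a = a"
    using t length_pattern_idem length_pattern_less by (auto simp: a_def pattern_reps_def)
  have "{s, t} \<subseteq> {u\<in>{..<?n}. ?\<mu> u = a}"
    using s t same_sign length_pattern_eq_iff[OF s t] by (auto simp: a_def step_length_def)
  moreover have "card {s, t} = card {u\<in>{..<?n}. ?\<mu> u = a}"
    using card_length_class_eq_2[OF rep card_R a(1)] \<open>s \<noteq> t\<close> by simp
  ultimately have class_a: "{u\<in>{..<?n}. ?\<mu> u = a} = {s, t}"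
    by (intro card_subset_eq[symmetric]) auto
  then have "a \<in> {s, t}" using a(2,3) by blast
  define b where "b = (if a = s then t else s)"
  have "b \<in> {s, t}" "b \<noteq> a" "{a, b} = {s, t}" using \<open>a \<in> {s, t}\<close> \<open>s \<noteq> t\<close> by (auto simp: b_def)
  then have "b < ?n" "?\<mu> b = a" using class_a by blast+
  moreover have "step ?n f b = step ?n f a" using same_sign \<open>a \<in> {s, t}\<close> \<open>b \<in> {s, t}\<close> by auto
  ultimately have "?\<epsilon> b = 1" by (simp add: length_signs_def)
  then show ?thesis
    using a(1) card_R class_a \<open>b < ?n\<close> \<open>b \<noteq> a\<close> \<open>?\<mu> b = a\<close> \<open>{a, b} = {s, t}\<close>
    unfolding degenerate_pattern_def by auto
qed

lemma degenerate_walk_in_degenerate_pattern_walks: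
  assumes f: "f \<in> degenerate_walks (2 * k) N"
  shows "f \<in> degenerate_pattern_walks k (length_pattern (2 * k) f) (length_signs (2 * k) f) N"
proof -
  let ?n = "2 * k" and ?\<mu> = "length_pattern (2 * k) f" and ?\<epsilon> = "length_signs (2 * k) f"
  let ?R = "pattern_reps ?n ?\<mu>"
  have walk: "f \<in> walks ?n N" and rep: "lengths_repeated ?n f" and not_paired: "\<not> paired_walk ?n f"
    using f by (auto simp: degenerate_walks_def)
  have f_pattern: "f \<in> pattern_walks ?n ?\<mu> ?\<epsilon> N" by (rule walk_in_length_pattern_walks[OF walk])
  have card_R: "card ?R \<le> k" by (rule card_reps_length_pattern_le[OF rep])
  show ?thesis
  proof (cases "card ?R < k")
    case True
    then show ?thesis using f_pattern by (simp add: degenerate_pattern_walks_def degenerate_pattern_def)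
  next
    case False
    then have card_R: "card ?R = k" using card_R by simp
    have "length_multiplicity ?n f (step_length ?n f t) = 2" if "t < ?n" for t
      using card_length_class_eq_2[OF rep card_R] length_multiplicity_eq_card_class[OF that]
        that length_pattern_idem length_pattern_less
      by (simp add: pattern_reps_def)
    then obtain t where t: "t < ?n" and "step ?n f t = 0 \<or>
        (\<exists>s<?n. s \<noteq> t \<and> step_length ?n f s = step_length ?n f t \<and> step ?n f s \<noteq> - step ?n f t)"
      using not_paired unfolding paired_walk_def by blast
    then consider "step ?n f t = 0"
      | s where "s < ?n" "s \<noteq> t" "step ?n f s = step ?n f t"
      by (auto simp: step_length_eq_iff abs_eq_iff)
    then show ?thesis
    proof cases
      case 1
      then show ?thesis using zero_step_walk_in_zero_step_pattern_walks[OF walk t] card_R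
        by (simp add: degenerate_pattern_walks_def)
    next
      case 2
      then show ?thesis using degenerate_pattern_if_same_sign[OF rep card_R _ t] f_pattern
        by (simp add: degenerate_pattern_walks_def)
    qed
  qed
qed

definition step_patterns :: "nat \<Rightarrow> ((nat \<Rightarrow> nat) \<times> (nat \<Rightarrow> int)) set" where
  "step_patterns n = {p \<in> PiE {..<n} (\<lambda>_. {..<n}) \<times> PiE {..<n} (\<lambda>_. {-1, 1}). step_pattern n (fst p)}"

lemma finite_step_patterns: "finite (step_patterns n)"
  by (rule finite_subset[of _ "PiE {..<n} (\<lambda>_. {..<n}) \<times> PiE {..<n} (\<lambda>_. {-1, 1})"])
     (auto simp: step_patterns_def intro!: finite_PiE)

lemma length_pattern_in_step_patterns: "(length_pattern n f, length_signs n f) \<in> step_patterns n"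
proof -
  have "length_pattern n f t = undefined" "length_signs n f t = undefined" if "t \<notin> {..<n}" for t
    using that by (simp_all add: length_pattern_def length_signs_def)
  then show ?thesis
    by (auto simp: step_patterns_def step_pattern_length_pattern length_pattern_less PiE_iff
        extensional_def length_signs_def)
qed

lemma card_degenerate_walks_le:
  assumes k: "k \<ge> 1" and N: "N \<ge> 1"
  shows "card (degenerate_walks (2 * k) N) \<le> card (step_patterns (2 * k)) * (2 * k + 1) * 3 ^ k * N ^ k"
proof -
  let ?D = "\<lambda>p. degenerate_pattern_walks k (fst p) (snd p) N"
  have "degenerate_walks (2 * k) N \<subseteq> (\<Union>p\<in>step_patterns (2 * k). ?D p)"
  proof
    fix f assume "f \<in> degenerate_walks (2 * k) N"
    then show "f \<in> (\<Union>p\<in>step_patterns (2 * k). ?D p)"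
      using degenerate_walk_in_degenerate_pattern_walks length_pattern_in_step_patterns
      by (intro UN_I[of "(length_pattern (2 * k) f, length_signs (2 * k) f)"]) simp_all
  qed
  then have "card (degenerate_walks (2 * k) N) \<le> card (\<Union>p\<in>step_patterns (2 * k). ?D p)"
    by (intro card_mono finite_UN_I finite_step_patterns)
       (simp_all add: degenerate_pattern_walks_def zero_step_pattern_walks_def finite_pattern_walks
        finite_pattern_reps)
  also have "\<dots> \<le> (\<Sum>p\<in>step_patterns (2 * k). card (?D p))" by (rule card_UN_le[OF finite_step_patterns])
  also have "\<dots> \<le> (\<Sum>p\<in>step_patterns (2 * k). (2 * k + 1) * (3 * N) ^ k)"
  proof (rule sum_mono)
    fix p assume "p \<in> step_patterns (2 * k)"
    then have "card (?D p) \<le> (2 * k + 1) * (2 * N + 1) ^ k"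
      using k by (intro card_degenerate_pattern_walks_le) (auto simp: step_patterns_def)
    also have "\<dots> \<le> (2 * k + 1) * (3 * N) ^ k" using N by (intro mult_left_mono power_mono) auto
    finally show "card (?D p) \<le> (2 * k + 1) * (3 * N) ^ k" .
  qed
  also have "\<dots> = card (step_patterns (2 * k)) * (2 * k + 1) * 3 ^ k * N ^ k"
    by (simp add: power_mult_distrib algebra_simps)
  finally show ?thesis .
qed


lemma lengths_repeated_if_pairing_walk:
  assumes \<sigma>: "\<sigma> \<in> pairings n" and f: "f \<in> pairing_walks n \<sigma> N"
  shows "lengths_repeated n f"
  unfolding lengths_repeated_def
proof (intro allI impI)
  fix t assume t: "t < n"
  have \<sigma>t: "\<sigma> t < n" "\<sigma> t \<noteq> t" using pairings_onD[OF \<sigma>] t by auto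
  have "step n f (\<sigma> t) = - step n f t" using f t by (auto simp: pairing_walks_def)
  then have "{t, \<sigma> t} \<subseteq> {s\<in>{..<n}. step_length n f s = step_length n f t}"
    using t \<sigma>t by (auto simp: step_length_eq_iff)
  then have "card {t, \<sigma> t} \<le> length_multiplicity n f (step_length n f t)"
    unfolding length_multiplicity_def by (rule card_mono[rotated]) auto
  then show "length_multiplicity n f (step_length n f t) \<ge> 2" using \<sigma>t by simp
qed

lemma paired_walk_partner_unique:
  assumes "paired_walk n f" "t < n"
  shows "\<exists>!s. s < n \<and> s \<noteq> t \<and> step_length n f s = step_length n f t"
proof -
  have "card {s\<in>{..<n}. step_length n f s = step_length n f t} = 2"
    using assms by (auto simp: paired_walk_def length_multiplicity_def)
  then obtain a b where ab: "{s\<in>{..<n}. step_length n f s = step_length n f t} = {a, b}" "a \<noteq> b"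
    by (auto simp: card_2_iff)
  have mem: "s < n \<and> step_length n f s = step_length n f t \<longleftrightarrow> s \<in> {a, b}" for s
    using ab(1)[unfolded set_eq_iff, rule_format, of s] by simp
  then have "t \<in> {a, b}" using assms(2) by blast
  then show ?thesis
    using mem ab(2) by (intro ex1I[of _ "if t = a then b else a"]) auto
qed

definition walk_partner :: "nat \<Rightarrow> (nat \<Rightarrow> nat) \<Rightarrow> nat \<Rightarrow> nat" where
  "walk_partner n f t = (if t < n then THE s. s < n \<and> s \<noteq> t \<and> step_length n f s = step_length n f t else t)"

lemma
  assumes "paired_walk n f" "t < n"
  shows walk_partner_less: "walk_partner n f t < n"
    and walk_partner_neq: "walk_partner n f t \<noteq> t"
    and step_length_walk_partner: "step_length n f (walk_partner n f t) = step_length n f t"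
  using theI'[OF paired_walk_partner_unique[OF assms]] assms(2) by (simp_all add: walk_partner_def)

lemma walk_partner_eqI:
  assumes "paired_walk n f" "t < n" "s < n" "s \<noteq> t" "step_length n f s = step_length n f t"
  shows "walk_partner n f t = s"
  using the1_equality[OF paired_walk_partner_unique[OF assms(1,2)]] assms(2-5)
  by (simp add: walk_partner_def)

lemma walk_partner_in_pairings:
  assumes "paired_walk n f"
  shows "walk_partner n f \<in> pairings n"
  unfolding pairings_on_def
proof (intro CollectI conjI ballI allI impI)
  fix t assume "t \<in> {..<n}"
  then have t: "t < n" by simp
  show "walk_partner n f t \<in> {..<n}" "walk_partner n f t \<noteq> t"
    using walk_partner_less[OF assms t] walk_partner_neq[OF assms t] by simp_all
  show "walk_partner n f (walk_partner n f t) = t"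
    using walk_partner_less[OF assms t] walk_partner_neq[OF assms t] step_length_walk_partner[OF assms t]
    by (intro walk_partner_eqI[OF assms]) (simp_all add: t)
next
  fix t assume "t \<notin> {..<n}"
  then show "walk_partner n f t = t" by (simp add: walk_partner_def)
qed

lemma paired_walk_in_partner_pairing_walks:
  assumes "paired_walk n f" "f \<in> walks n N"
  shows "f \<in> pairing_walks n (walk_partner n f) N"
proof -
  have opposite: "step n f s = - step n f t"
    if "t < n" "s < n" "s \<noteq> t" "step_length n f s = step_length n f t" for s t
    using assms(1) that unfolding paired_walk_def by blast
  show ?thesis
    using assms(2) opposite walk_partner_less[OF assms(1)] walk_partner_neq[OF assms(1)]
      step_length_walk_partner[OF assms(1)]
    by (simp add: pairing_walks_def)
qed

lemma pairing_of_paired_walk_unique: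
  assumes "paired_walk n f" "\<sigma> \<in> pairings n" "f \<in> pairing_walks n \<sigma> N"
  shows "\<sigma> = walk_partner n f"
proof
  fix t show "\<sigma> t = walk_partner n f t"
  proof (cases "t < n")
    case True
    have "step n f (\<sigma> t) = - step n f t" using assms(3) True by (auto simp: pairing_walks_def)
    then have "step_length n f (\<sigma> t) = step_length n f t" by (simp add: step_length_eq_iff)
    moreover have "\<sigma> t < n" "\<sigma> t \<noteq> t" using pairings_onD[OF assms(2)] True by auto
    ultimately show ?thesis using walk_partner_eqI[OF assms(1) True, of "\<sigma> t"] by simp
  next
    case False
    then show ?thesis using pairings_on_outside[OF assms(2)] by (simp add: walk_partner_def)
  qed
qed

definition pairings_of_walk :: "nat \<Rightarrow> nat \<Rightarrow> (nat \<Rightarrow> nat) \<Rightarrow> (nat \<Rightarrow> nat) set" where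
  "pairings_of_walk n N f = {\<sigma> \<in> pairings n. f \<in> pairing_walks n \<sigma> N}"

lemma pairings_of_paired_walk:
  assumes "paired_walk n f" "f \<in> walks n N"
  shows "pairings_of_walk n N f = {walk_partner n f}"
proof (intro equalityI subsetI)
  fix \<sigma> assume "\<sigma> \<in> pairings_of_walk n N f"
  then show "\<sigma> \<in> {walk_partner n f}"
    using pairing_of_paired_walk_unique[OF assms(1)] unfolding pairings_of_walk_def by blast
next
  fix \<sigma> assume "\<sigma> \<in> {walk_partner n f}"
  then show "\<sigma> \<in> pairings_of_walk n N f"
    using walk_partner_in_pairings[OF assms(1)] paired_walk_in_partner_pairing_walks[OF assms]
    by (simp add: pairings_of_walk_def)
qed

lemma sum_card_pairing_walks:
  "(\<Sum>\<sigma>\<in>pairings n. card (pairing_walks n \<sigma> N)) = (\<Sum>f\<in>walks n N. card (pairings_of_walk n N f))"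
proof -
  have "card (pairing_walks n \<sigma> N) = (\<Sum>f\<in>walks n N. if f \<in> pairing_walks n \<sigma> N then 1 else 0)" for \<sigma>
    by (simp add: sum.If_cases finite_walks pairing_walks_def Int_def)
  then have "(\<Sum>\<sigma>\<in>pairings n. card (pairing_walks n \<sigma> N))
      = (\<Sum>\<sigma>\<in>pairings n. \<Sum>f\<in>walks n N. if f \<in> pairing_walks n \<sigma> N then 1 else 0)"
    by simp
  also have "\<dots> = (\<Sum>f\<in>walks n N. \<Sum>\<sigma>\<in>pairings n. if f \<in> pairing_walks n \<sigma> N then 1 else 0)"
    by (rule sum.swap)
  also have "\<dots> = (\<Sum>f\<in>walks n N. card (pairings_of_walk n N f))"
    by (simp add: pairings_of_walk_def sum.If_cases finite_pairings_on Int_def)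
  finally show ?thesis .
qed

lemma walk_moment_eq_0_if_not_lengths_repeated:
  assumes "density_moment p 1 = 0" "\<not> lengths_repeated n f"
  shows "walk_moment p n f = 0"
proof -
  obtain t where t: "t < n" "length_multiplicity n f (step_length n f t) < 2"
    using assms(2) by (auto simp: lengths_repeated_def not_le)
  moreover have "length_multiplicity n f (step_length n f t) \<noteq> 0"
    using t(1) by (auto simp: length_multiplicity_def)
  ultimately have "length_multiplicity n f (step_length n f t) = 1" by simp
  then have "density_moment p (length_multiplicity n f (step_length n f t)) = 0" using assms(1) by simp
  then show ?thesis using t(1) by (auto simp: walk_moment_def prod_zero_iff)
qed

lemma walk_moment_paired_walk:
  assumes "density_moment p 2 = 1" "paired_walk n f"
  shows "walk_moment p n f = 1"
proof -
  have "\<not> (\<exists>t<n. step_length n f t = 0)" using assms(2) by (auto simp: paired_walk_def step_length_eq_0_iff)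
  moreover have "density_moment p (length_multiplicity n f v) = 1" if "v \<in> step_length n f ` {..<n}" for v
    using that assms by (auto simp: paired_walk_def)
  ultimately show ?thesis by (simp add: walk_moment_def)
qed

definition walk_moment_bound :: "(real \<Rightarrow> real) \<Rightarrow> nat \<Rightarrow> real" where
  "walk_moment_bound p n = (1 + (\<Sum>m\<le>n. \<bar>density_moment p m\<bar>)) ^ n"

lemma abs_walk_moment_le: "\<bar>walk_moment p n f\<bar> \<le> walk_moment_bound p n"
proof -
  let ?C = "1 + (\<Sum>m\<le>n. \<bar>density_moment p m\<bar>)" and ?V = "step_length n f ` {..<n}"
  have C: "?C \<ge> 1" by (simp add: sum_nonneg)
  have "\<bar>density_moment p (length_multiplicity n f v)\<bar> \<le> ?C" for v
  proof -
    have "length_multiplicity n f v \<le> n"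
      unfolding length_multiplicity_def by (rule order.trans[OF card_mono[of "{..<n}"]]) auto
    then have "\<bar>density_moment p (length_multiplicity n f v)\<bar> \<le> (\<Sum>m\<le>n. \<bar>density_moment p m\<bar>)"
      by (intro member_le_sum) auto
    then show ?thesis by simp
  qed
  then have "\<bar>\<Prod>v\<in>?V. density_moment p (length_multiplicity n f v)\<bar> \<le> ?C ^ card ?V"
    by (simp add: abs_prod prod_mono[of _ _ "\<lambda>_. ?C", simplified])
  also have "\<dots> \<le> ?C ^ n" using C card_image_le[of "{..<n}" "step_length n f"] by (intro power_increasing) auto
  finally show ?thesis by (auto simp: walk_moment_def walk_moment_bound_def)
qed

text \<open>Outside the degenerate walks, the moment of a walk equals the number of pairings it
  respects: both are \<open>1\<close> on paired walks and \<open>0\<close> on walks with a step length occurring once.\<close>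
lemma sum_walk_moment_approx:
  assumes "density_moment p 1 = 0" "density_moment p 2 = 1"
  shows "\<bar>(\<Sum>f\<in>walks n N. walk_moment p n f) - real (\<Sum>\<sigma>\<in>pairings n. card (pairing_walks n \<sigma> N))\<bar>
    \<le> (walk_moment_bound p n + real (card (pairings n))) * real (card (degenerate_walks n N))"
proof -
  define d where "d f = walk_moment p n f - real (card (pairings_of_walk n N f))" for f
  have d0: "d f = 0" if f: "f \<in> walks n N - degenerate_walks n N" for f
  proof (cases "paired_walk n f")
    case True
    then show ?thesis using f walk_moment_paired_walk[OF assms(2)] pairings_of_paired_walk by (simp add: d_def)
  next
    case False
    then have "\<not> lengths_repeated n f" using f by (auto simp: degenerate_walks_def)
    moreover have "pairings_of_walk n N f = {}"
      using lengths_repeated_if_pairing_walk calculation by (auto simp: pairings_of_walk_def)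
    ultimately show ?thesis using walk_moment_eq_0_if_not_lengths_repeated[OF assms(1)] by (simp add: d_def)
  qed
  have d_bound: "\<bar>d f\<bar> \<le> walk_moment_bound p n + real (card (pairings n))" for f
  proof -
    have "card (pairings_of_walk n N f) \<le> card (pairings n)"
      unfolding pairings_of_walk_def by (rule card_mono[OF finite_pairings_on]) auto
    then show ?thesis using abs_walk_moment_le[of p n f] by (simp add: d_def abs_le_iff)
  qed
  have "(\<Sum>f\<in>walks n N. walk_moment p n f) - real (\<Sum>\<sigma>\<in>pairings n. card (pairing_walks n \<sigma> N))
      = (\<Sum>f\<in>walks n N. d f)"
    by (simp add: sum_card_pairing_walks d_def sum_subtractf)
  also have "\<dots> = (\<Sum>f\<in>degenerate_walks n N. d f)"
    by (rule sum.mono_neutral_right[OF finite_walks]) (use d0 in \<open>auto simp: degenerate_walks_def\<close>)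
  finally have "\<bar>(\<Sum>f\<in>walks n N. walk_moment p n f) - real (\<Sum>\<sigma>\<in>pairings n. card (pairing_walks n \<sigma> N))\<bar>
      \<le> (\<Sum>f\<in>degenerate_walks n N. \<bar>d f\<bar>)"
    by (simp add: sum_abs)
  also have "\<dots> \<le> (\<Sum>f\<in>degenerate_walks n N. walk_moment_bound p n + real (card (pairings n)))"
    by (rule sum_mono) (rule d_bound)
  finally show ?thesis by (simp add: mult.commute)
qed

section \<open>The limit of the even moments\<close>

context iid_toeplitz
begin

lemma moment_N_even_eq:
  assumes "k \<ge> 1" "N \<ge> 1"
  shows "moment_N M X (2 * k) N = (\<Sum>f\<in>walks (2 * k) N. walk_moment p (2 * k) f) / real N ^ Suc k"
proof -
  have "real (2 * k) / 2 + 1 = real (Suc k)" by simp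
  moreover have "real N powr real (Suc k) = real N ^ Suc k" by (rule powr_realpow) (use assms(2) in simp)
  ultimately have "real N powr (-(real (2 * k) / 2 + 1)) = 1 / real N ^ Suc k"
    by (simp only: powr_minus divide_inverse)
  then show ?thesis using moment_N_eq_sum_walk_moment[of "2 * k" N] assms(1) by simp
qed

lemma moment_N_minus_pairing_densities_bound:
  assumes "density_moment p 1 = 0" "density_moment p 2 = 1" "k \<ge> 1"
  obtains C where "\<And>N. N \<ge> 1 \<Longrightarrow>
    \<bar>moment_N M X (2 * k) N - (\<Sum>\<sigma>\<in>pairings (2 * k). real (card (pairing_walks (2 * k) \<sigma> N)) / real N ^ Suc k)\<bar>
      \<le> C / real N"
proof
  let ?B = "walk_moment_bound p (2 * k) + real (card (pairings (2 * k)))"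
  let ?c = "real (card (step_patterns (2 * k)) * (2 * k + 1) * 3 ^ k)"
  fix N :: nat assume N: "N \<ge> 1"
  have pos: "real N ^ Suc k > 0" using N by simp
  have B: "?B \<ge> 0" by (simp add: walk_moment_bound_def sum_nonneg)
  have "(\<Sum>\<sigma>\<in>pairings (2 * k). real (card (pairing_walks (2 * k) \<sigma> N)) / real N ^ Suc k)
      = real (\<Sum>\<sigma>\<in>pairings (2 * k). card (pairing_walks (2 * k) \<sigma> N)) / real N ^ Suc k"
    by (simp add: sum_divide_distrib)
  then have "moment_N M X (2 * k) N - (\<Sum>\<sigma>\<in>pairings (2 * k). real (card (pairing_walks (2 * k) \<sigma> N)) / real N ^ Suc k)
      = ((\<Sum>f\<in>walks (2 * k) N. walk_moment p (2 * k) f)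
          - real (\<Sum>\<sigma>\<in>pairings (2 * k). card (pairing_walks (2 * k) \<sigma> N))) / real N ^ Suc k"
    by (simp add: moment_N_even_eq[OF assms(3) N] diff_divide_distrib)
  then have "\<bar>moment_N M X (2 * k) N - (\<Sum>\<sigma>\<in>pairings (2 * k). real (card (pairing_walks (2 * k) \<sigma> N)) / real N ^ Suc k)\<bar>
      = \<bar>(\<Sum>f\<in>walks (2 * k) N. walk_moment p (2 * k) f)
          - real (\<Sum>\<sigma>\<in>pairings (2 * k). card (pairing_walks (2 * k) \<sigma> N))\<bar> / real N ^ Suc k"
    by (simp only: abs_divide abs_of_pos[OF pos])
  also have "\<dots> \<le> ?B * real (card (degenerate_walks (2 * k) N)) / real N ^ Suc k"
    using sum_walk_moment_approx[OF assms(1,2)] pos by (intro divide_right_mono) auto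
  also have "\<dots> \<le> ?B * (?c * real N ^ k) / real N ^ Suc k"
    using of_nat_mono[OF card_degenerate_walks_le[OF assms(3) N]] pos B
    by (intro divide_right_mono mult_left_mono) auto
  also have "\<dots> = ?B * ?c / real N"
  proof -
    have "b * (c * real N ^ k) / real N ^ Suc k = b * c / real N" for b c :: real
      using N by (simp add: field_simps)
    then show ?thesis .
  qed
  finally show "\<bar>moment_N M X (2 * k) N
      - (\<Sum>\<sigma>\<in>pairings (2 * k). real (card (pairing_walks (2 * k) \<sigma> N)) / real N ^ Suc k)\<bar>
      \<le> ?B * ?c / real N" .
qed

lemma moment_N_tendsto_sum_pairing_volume:
  assumes "density_moment p 1 = 0" "density_moment p 2 = 1" "k \<ge> 1"
  shows "(\<lambda>N. moment_N M X (2 * k) N) \<longlonglongrightarrow> (\<Sum>\<sigma>\<in>pairings (2 * k). pairing_volume k \<sigma>)"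
proof -
  let ?density = "\<lambda>N. \<Sum>\<sigma>\<in>pairings (2 * k). real (card (pairing_walks (2 * k) \<sigma> N)) / real N ^ Suc k"
  obtain C where C: "\<And>N. N \<ge> 1 \<Longrightarrow> \<bar>moment_N M X (2 * k) N - ?density N\<bar> \<le> C / real N"
    using moment_N_minus_pairing_densities_bound[OF assms] by blast
  have "?density \<longlonglongrightarrow> (\<Sum>\<sigma>\<in>pairings (2 * k). pairing_volume k \<sigma>)"
    using pairing_density_tendsto_volume assms(3) by (intro tendsto_sum) auto
  moreover have "(\<lambda>N. moment_N M X (2 * k) N - ?density N) \<longlonglongrightarrow> 0"
    by (rule Lim_null_comparison[OF eventually_sequentiallyI[of 1] lim_const_over_n]) (use C in simp)
  ultimately show ?thesis by (rule Lim_transform)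
qed

end

theorem mainTheorem7:
  fixes M :: "'a measure" and X :: "nat \<Rightarrow> 'a \<Rightarrow> real"
    and p :: "real \<Rightarrow> real" and k :: nat
  assumes "prob_space M"
    and "prob_space.indep_vars M (\<lambda>_. borel) X {1..}"
    and "\<And>j. j \<ge> 1 \<Longrightarrow> distributed M lborel (X j) (\<lambda>x. ennreal (p x))"
    and "\<And>x. p x \<ge> 0"
    and "\<And>m::nat. integrable lborel (\<lambda>x. x ^ m * p x)"
    and "(LINT x|lborel. x * p x) = 0"
    and "(LINT x|lborel. x ^ 2 * p x) = 1"
    and "k \<ge> 2"
  shows "\<exists>L. (\<lambda>N. moment_N M X (2 * k) N) \<longlonglongrightarrow> L \<and> L < real (odd_double_fact k)"
proof -
  interpret iid_toeplitz M X p
    using assms(1-5) by (intro iid_toeplitz.intro iid_toeplitz_axioms.intro) auto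
  have "density_moment p 1 = 0" "density_moment p 2 = 1"
    using assms(6,7) by (simp_all add: density_moment_def)
  then have "(\<lambda>N. moment_N M X (2 * k) N) \<longlonglongrightarrow> (\<Sum>\<sigma>\<in>pairings (2 * k). pairing_volume k \<sigma>)"
    using assms(8) by (intro moment_N_tendsto_sum_pairing_volume) auto
  moreover have "(\<Sum>\<sigma>\<in>pairings (2 * k). pairing_volume k \<sigma>) < real (odd_double_fact k)"
    by (rule sum_pairing_volume_less[OF assms(8)])
  ultimately show ?thesis by blast
qed

end
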